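(* Let $\Omega:=\mathbb{D}\setminus[0,1)$, where $\mathbb{D}$ is the open unit disc in $\mathbb{C}$, let $\psi:\mathbb{D}\to\Omega$ be a Riemann map and $o=\psi(0)$. Then for every $x\in(0,1]$ there is $R_0>0$ such that $H^s_o(x,R)=\emptyset$ for all $0<R<R_0$. Moreover, $\overline{H^b_o(x,R)}\cap\partial\Omega=\{x\}$ for every $x\in\partial\Omega$ and $R>0$.
   Context: For a Kobayashi hyperbolic domain $\Omega\subset\mathbb{C}$ with Kobayashi distance $\mathsf{k}_\Omega$, $x\in\partial\Omega$, $o\in\Omega$, $R>0$: $H^s_o(x,R)=\{z\in\Omega:\limsup_{w\to x}(\mathsf{k}_\Omega(z,w)-\mathsf{k}_\Omega(o,w))<\tfrac12\log R\}$ and $H^b_o(x,R)=\{z\in\Omega:\liminf_{w\to x}(\mathsf{k}_\Omega(z,w)-\mathsf{k}_\Omega(o,w))<\tfrac12\log R\}$; closures in $\mathbb{C}$. *)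

theory Defs
  imports "HOL-Complex_Analysis.Complex_Analysis"
begin

definition disc_dist0 :: "complex \<Rightarrow> real" where
  "disc_dist0 t = (1/2) * ln ((1 + norm t) / (1 - norm t))"

definition lempert :: "complex set \<Rightarrow> complex \<Rightarrow> complex \<Rightarrow> real" where
  "lempert \<Omega> z w = Inf {disc_dist0 t | t f. t \<in> ball 0 1 \<and> f holomorphic_on ball 0 1 \<and>
       f ` ball 0 1 \<subseteq> \<Omega> \<and> f 0 = z \<and> f t = w}"

definition kobayashi :: "complex set \<Rightarrow> complex \<Rightarrow> complex \<Rightarrow> real" where
  "kobayashi \<Omega> z w = Inf {(\<Sum>i<n. lempert \<Omega> (p i) (p (Suc i))) | n p.
       p 0 = z \<and> p n = w \<and> (\<forall>i\<le>n. p i \<in> \<Omega>)}"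

definition horoball_s :: "complex set \<Rightarrow> complex \<Rightarrow> complex \<Rightarrow> real \<Rightarrow> complex set" where
  "horoball_s \<Omega> o' x R = {z \<in> \<Omega>.
     Limsup (at x within \<Omega>) (\<lambda>w. ereal (kobayashi \<Omega> z w - kobayashi \<Omega> o' w))
       < ereal (ln R / 2)}"

definition horoball_b :: "complex set \<Rightarrow> complex \<Rightarrow> complex \<Rightarrow> real \<Rightarrow> complex set" where
  "horoball_b \<Omega> o' x R = {z \<in> \<Omega>.
     Liminf (at x within \<Omega>) (\<lambda>w. ereal (kobayashi \<Omega> z w - kobayashi \<Omega> o' w))
       < ereal (ln R / 2)}"

end

theory Submission
  imports Defs
begin

text \<open>
  The slit disc has an explicit Riemann map, built from Cayley maps and square roots, that
  extends continuously to the closed disc and sends two distinct points of the circle to every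
  point \<open>x\<close> of the slit \<open>(0, 1]\<close>. Any other Riemann map \<open>\<psi>\<close> differs from it by a disc
  automorphism, so \<open>\<psi>\<close> extends continuously to the closed disc as well.

  The Kobayashi distance of \<open>\<Omega>\<close> is the Poincare distance transported by \<open>\<psi>\<close>, so with
  \<open>a = \<psi>\<^sup>-\<^sup>1 z\<close> and \<open>b = \<psi>\<^sup>-\<^sup>1 w\<close> the function \<open>k(z, w) - k(\<psi> 0, w)\<close> is
  \<open>ln (|1 - cnj a * b|\<^sup>2 / (1 - |a|\<^sup>2)) / 2\<close> up to a bounded error. Letting \<open>w \<rightarrow> x\<close> along the
  radius ending at whichever preimage of \<open>x\<close> is farther from \<open>a\<close> bounds its limsup below
  independently of \<open>z\<close>, so small horoballs at \<open>x\<close> are empty. For \<open>a\<close> tending to a preimage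
  \<open>e\<close> of a boundary point \<open>x\<close> along its radius, the liminf along the same radius tends to
  \<open>-\<infinity>\<close>, so \<open>x\<close> lies in the closure of every big horoball at \<open>x\<close>. Near another boundary
  point \<open>y\<close>, \<open>a\<close> is close to the circle but away from the preimages of \<open>x\<close>, which makes the
  liminf large, so \<open>y\<close> is not in that closure.
\<close>

section \<open>The Poincare distance of the unit disc\<close>

definition disc_moebius :: "complex \<Rightarrow> complex \<Rightarrow> complex" where
  "disc_moebius a z = (z - a) / (1 - cnj a * z)"

definition pseudo_hyp_dist :: "complex \<Rightarrow> complex \<Rightarrow> real" where
  "pseudo_hyp_dist a b = cmod ((a - b) / (1 - cnj a * b))"

definition poincare_dist :: "complex \<Rightarrow> complex \<Rightarrow> real" where
  "poincare_dist a b = artanh (pseudo_hyp_dist a b)"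

lemma disc_dist0_eq_artanh: "disc_dist0 t = artanh (cmod t)"
  by (simp add: disc_dist0_def artanh_def)

lemma disc_moebius_eq_Moebius_function: "disc_moebius a = Moebius_function 0 a"
  by (rule ext) (simp add: disc_moebius_def Moebius_function_simple)

lemma disc_moebius_holomorphic: "cmod a < 1 \<Longrightarrow> disc_moebius a holomorphic_on ball 0 1"
  unfolding disc_moebius_eq_Moebius_function by (rule Moebius_function_holomorphic)

lemma disc_moebius_norm_less_1: "cmod a < 1 \<Longrightarrow> cmod z < 1 \<Longrightarrow> cmod (disc_moebius a z) < 1"
  unfolding disc_moebius_eq_Moebius_function by (rule Moebius_function_norm_lt_1)

lemma disc_moebius_self [simp]: "disc_moebius a a = 0"
  by (simp add: disc_moebius_def)

lemma disc_moebius_minus_zero [simp]: "disc_moebius (-a) 0 = a"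
  by (simp add: disc_moebius_def)

lemma norm_disc_moebius_eq_pseudo_hyp_dist: "cmod (disc_moebius a b) = pseudo_hyp_dist a b"
  by (simp add: disc_moebius_def pseudo_hyp_dist_def norm_divide norm_minus_commute)

lemma one_minus_cnj_mult_nonzero:
  assumes "cmod a < 1" "cmod b \<le> 1"
  shows "1 - cnj a * b \<noteq> 0"
proof
  assume "1 - cnj a * b = 0"
  then have "cmod (cnj a * b) = 1"
    by (metis eq_iff_diff_eq_0 norm_one)
  moreover have "cmod a * cmod b < 1"
    using assms by (smt (verit) mult_left_le norm_ge_zero)
  ultimately show False
    by (simp add: norm_mult)
qed

lemma norm_one_minus_cnj_mult_sq:
  "(cmod (1 - cnj a * b))\<^sup>2 - (cmod (a - b))\<^sup>2 = (1 - (cmod a)\<^sup>2) * (1 - (cmod b)\<^sup>2)"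
  unfolding cmod_power2 by (cases a; cases b) (simp add: power2_eq_square algebra_simps)

lemma one_minus_pseudo_hyp_dist_sq:
  assumes "1 - cnj a * b \<noteq> 0"
  shows "1 - (pseudo_hyp_dist a b)\<^sup>2 = (1 - (cmod a)\<^sup>2) * (1 - (cmod b)\<^sup>2) / (cmod (1 - cnj a * b))\<^sup>2"
  using norm_one_minus_cnj_mult_sq[of a b] assms
  by (simp add: pseudo_hyp_dist_def norm_divide power_divide field_simps)

lemma disc_moebius_inverse:
  assumes a: "cmod a < 1" and z: "cmod z \<le> 1"
  shows "disc_moebius (-a) (disc_moebius a z) = z"
proof -
  have d: "1 - cnj a * z \<noteq> 0" and aa: "1 - cnj a * a \<noteq> 0"
    using one_minus_cnj_mult_nonzero a z by auto
  have g: "(W / D + A) / (1 + C * (W / D)) = (W + A * D) / (D + C * W)" if "D \<noteq> 0" for W D A C :: complex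
  proof -
    have "W / D + A = (W + A * D) / D" "1 + C * (W / D) = (D + C * W) / D"
      using that by (simp_all add: field_simps)
    then show ?thesis
      using that by simp
  qed
  have "disc_moebius (-a) (disc_moebius a z) = ((z - a) / (1 - cnj a * z) + a) / (1 + cnj a * ((z - a) / (1 - cnj a * z)))"
    by (simp add: disc_moebius_def)
  also have "\<dots> = ((z - a) + a * (1 - cnj a * z)) / ((1 - cnj a * z) + cnj a * (z - a))"
    by (rule g[OF d])
  also have "(z - a) + a * (1 - cnj a * z) = z * (1 - cnj a * a)"
    by (simp add: algebra_simps)
  also have "(1 - cnj a * z) + cnj a * (z - a) = 1 - cnj a * a"
    by (simp add: algebra_simps)
  finally show ?thesis
    using aa by simp
qed

lemma disc_moebius_norm_le_1:
  assumes a: "cmod a < 1" and z: "cmod z \<le> 1"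
  shows "cmod (disc_moebius a z) \<le> 1"
proof -
  have "0 \<le> (1 - (cmod a)\<^sup>2) * (1 - (cmod z)\<^sup>2)"
    using a z by (intro mult_nonneg_nonneg) (auto simp: abs_square_le_1 power_le_one)
  then have "(cmod (a - z))\<^sup>2 \<le> (cmod (1 - cnj a * z))\<^sup>2"
    using norm_one_minus_cnj_mult_sq[of a z] by linarith
  then have "cmod (a - z) \<le> cmod (1 - cnj a * z)"
    by (rule power2_le_imp_le) simp
  then have "cmod (z - a) \<le> cmod (1 - cnj a * z)"
    by (simp add: norm_minus_commute)
  then show ?thesis
    using one_minus_cnj_mult_nonzero[OF a z] by (simp add: disc_moebius_def norm_divide divide_le_eq_1)
qed

lemma continuous_on_disc_moebius: "cmod a < 1 \<Longrightarrow> continuous_on (cball 0 1) (disc_moebius a)"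
  unfolding disc_moebius_def using one_minus_cnj_mult_nonzero by (intro continuous_intros) auto

lemma pseudo_hyp_dist_bounds:
  assumes "cmod a < 1" "cmod b < 1"
  shows "0 \<le> pseudo_hyp_dist a b" "pseudo_hyp_dist a b < 1"
proof -
  have nz: "1 - cnj a * b \<noteq> 0"
    using one_minus_cnj_mult_nonzero assms by simp
  have "(1 - (cmod a)\<^sup>2) * (1 - (cmod b)\<^sup>2) / (cmod (1 - cnj a * b))\<^sup>2 > 0"
    using assms nz by (intro divide_pos_pos mult_pos_pos) (auto simp: abs_square_less_1)
  then have "(pseudo_hyp_dist a b)\<^sup>2 < 1"
    using one_minus_pseudo_hyp_dist_sq[OF nz] by linarith
  then show "pseudo_hyp_dist a b < 1"
    by (simp add: abs_square_less_1 pseudo_hyp_dist_def)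
  show "0 \<le> pseudo_hyp_dist a b"
    by (simp add: pseudo_hyp_dist_def)
qed

lemma pseudo_hyp_dist_commute: "pseudo_hyp_dist a b = pseudo_hyp_dist b a"
proof -
  have "cmod (1 - cnj a * b) = cmod (1 - cnj b * a)"
    by (metis complex_cnj_cnj complex_cnj_diff complex_cnj_mult complex_cnj_one complex_mod_cnj mult.commute)
  then show ?thesis
    by (simp add: pseudo_hyp_dist_def norm_divide norm_minus_commute)
qed

lemma pseudo_hyp_dist_disc_moebius:
  assumes c: "cmod c < 1" and a: "cmod a < 1" and b: "cmod b < 1"
  shows "pseudo_hyp_dist (disc_moebius c a) (disc_moebius c b) = pseudo_hyp_dist a b"
proof -
  have D1: "1 - cnj c * a \<noteq> 0" and D2: "1 - cnj c * b \<noteq> 0" and D3: "1 - cnj a * b \<noteq> 0"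
    using one_minus_cnj_mult_nonzero c a b by auto
  have D1': "1 - c * cnj a \<noteq> 0"
    using D1 by (metis complex_cnj_cnj complex_cnj_diff complex_cnj_mult complex_cnj_one complex_cnj_zero_iff)
  have cc: "1 - c * cnj c \<noteq> 0"
    using one_minus_cnj_mult_nonzero[of c c] c by (simp add: mult.commute)
  have num: "disc_moebius c a - disc_moebius c b = (a - b) * (1 - c * cnj c) / ((1 - cnj c * a) * (1 - cnj c * b))"
    using D1 D2 unfolding disc_moebius_def by (simp add: field_simps)
  have den: "1 - cnj (disc_moebius c a) * disc_moebius c b
      = (1 - c * cnj c) * (1 - cnj a * b) / ((1 - c * cnj a) * (1 - cnj c * b))"
  proof -
    have "cnj (disc_moebius c a) = (cnj a - cnj c) / (1 - c * cnj a)"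
      by (simp add: disc_moebius_def)
    moreover have "1 - X / Y * (Z / W) = (Y * W - X * Z) / (Y * W)" if "Y \<noteq> 0" "W \<noteq> 0" for X Y Z W :: complex
      using that by (simp add: field_simps)
    ultimately have "1 - cnj (disc_moebius c a) * disc_moebius c b
        = ((1 - c * cnj a) * (1 - cnj c * b) - (cnj a - cnj c) * (b - c)) / ((1 - c * cnj a) * (1 - cnj c * b))"
      using D1' D2 by (simp add: disc_moebius_def)
    also have "(1 - c * cnj a) * (1 - cnj c * b) - (cnj a - cnj c) * (b - c) = (1 - c * cnj c) * (1 - cnj a * b)"
      by (simp add: algebra_simps)
    finally show ?thesis .
  qed
  have eq: "(disc_moebius c a - disc_moebius c b) / (1 - cnj (disc_moebius c a) * disc_moebius c b)
      = ((a - b) / (1 - cnj a * b)) * ((1 - c * cnj a) / (1 - cnj c * a))"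
  proof -
    have "(P * Q / (X * Y)) / (Q * Z / (Xc * Y)) = (P / Z) * (Xc / X)"
      if "Q \<noteq> 0" "X \<noteq> 0" "Y \<noteq> 0" "Z \<noteq> 0" "Xc \<noteq> 0" for P Q X Y Z Xc :: complex
      using that by (simp add: field_simps)
    from this[OF cc D1 D2 D3 D1'] show ?thesis
      unfolding num den by simp
  qed
  have "cmod ((1 - c * cnj a) / (1 - cnj c * a)) = 1"
  proof -
    have "cmod (1 - c * cnj a) = cmod (1 - cnj c * a)"
      by (metis complex_cnj_cnj complex_cnj_diff complex_cnj_mult complex_cnj_one complex_mod_cnj)
    then show ?thesis
      using D1 by (simp add: norm_divide)
  qed
  then show ?thesis
    unfolding pseudo_hyp_dist_def eq norm_mult by simp
qed

lemma pseudo_hyp_dist_le_norm_add: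
  assumes u: "cmod u < 1" and v: "cmod v < 1"
  shows "pseudo_hyp_dist u v \<le> (cmod u + cmod v) / (1 + cmod u * cmod v)"
proof -
  define s where "s = cmod u"
  define t where "t = cmod v"
  have s: "0 \<le> s" "s < 1" and t: "0 \<le> t" "t < 1"
    using u v by (auto simp: s_def t_def)
  have nz: "1 - cnj u * v \<noteq> 0"
    using one_minus_cnj_mult_nonzero u v by simp
  have n1: "cmod (1 - cnj u * v) \<le> 1 + s * t"
    using norm_triangle_ineq4[of 1 "cnj u * v"] by (simp add: norm_mult s_def t_def)
  have "(1 - s\<^sup>2) * (1 - t\<^sup>2) / (1 + s * t)\<^sup>2 \<le> (1 - s\<^sup>2) * (1 - t\<^sup>2) / (cmod (1 - cnj u * v))\<^sup>2"
    using s t n1 nz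
    by (intro divide_left_mono mult_nonneg_nonneg mult_pos_pos power_mono) (auto simp: abs_square_le_1 power_le_one)
  also have "(1 - s\<^sup>2) * (1 - t\<^sup>2) / (1 + s * t)\<^sup>2 = 1 - ((s + t) / (1 + s * t))\<^sup>2"
  proof -
    have "1 + s * t \<noteq> 0"
      using s t by (smt (verit) mult_nonneg_nonneg)
    then have "1 - ((s + t) / (1 + s * t))\<^sup>2 = ((1 + s * t)\<^sup>2 - (s + t)\<^sup>2) / (1 + s * t)\<^sup>2"
      by (simp add: diff_divide_distrib power_divide)
    also have "(1 + s * t)\<^sup>2 - (s + t)\<^sup>2 = (1 - s\<^sup>2) * (1 - t\<^sup>2)"
      by (simp add: power2_eq_square algebra_simps)
    finally show ?thesis by simp
  qed
  finally have "(pseudo_hyp_dist u v)\<^sup>2 \<le> ((s + t) / (1 + s * t))\<^sup>2"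
    using one_minus_pseudo_hyp_dist_sq[OF nz] unfolding s_def t_def by linarith
  then show ?thesis
    using s t by (simp add: s_def t_def pseudo_hyp_dist_def power2_le_iff_abs_le)
qed

lemma pseudo_hyp_dist_triangle:
  assumes a: "cmod a < 1" and b: "cmod b < 1" and c: "cmod c < 1"
  shows "pseudo_hyp_dist a c
    \<le> (pseudo_hyp_dist a b + pseudo_hyp_dist b c) / (1 + pseudo_hyp_dist a b * pseudo_hyp_dist b c)"
proof -
  have "pseudo_hyp_dist a c = pseudo_hyp_dist (disc_moebius b a) (disc_moebius b c)"
    using pseudo_hyp_dist_disc_moebius[OF b a c] by simp
  also have "\<dots> \<le> (cmod (disc_moebius b a) + cmod (disc_moebius b c))
      / (1 + cmod (disc_moebius b a) * cmod (disc_moebius b c))"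
    using pseudo_hyp_dist_le_norm_add disc_moebius_norm_less_1 a b c by simp
  finally show ?thesis
    by (simp add: norm_disc_moebius_eq_pseudo_hyp_dist pseudo_hyp_dist_commute[of b a])
qed

lemma artanh_mono:
  fixes x y :: real
  assumes "0 \<le> x" "x \<le> y" "y < 1"
  shows "artanh x \<le> artanh y"
proof -
  have "(1 + x) / (1 - x) \<le> (1 + y) / (1 - y)"
    using assms by (simp add: field_simps)
  moreover have "0 < (1 + x) / (1 - x)"
    using assms by simp
  ultimately show ?thesis
    unfolding artanh_def by simp
qed

lemma artanh_add:
  fixes y z :: real
  assumes "0 \<le> y" "y < 1" "0 \<le> z" "z < 1"
  shows "artanh ((y + z) / (1 + y * z)) = artanh y + artanh z"
proof -
  have yz: "1 + y * z > 0"
    using assms by (smt (verit) mult_nonneg_nonneg)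
  have "1 + (y + z) / (1 + y * z) = (1 + y) * (1 + z) / (1 + y * z)"
    and "1 - (y + z) / (1 + y * z) = (1 - y) * (1 - z) / (1 + y * z)"
    using yz by (simp_all add: field_simps algebra_simps)
  then have "(1 + (y + z) / (1 + y * z)) / (1 - (y + z) / (1 + y * z))
      = ((1 + y) / (1 - y)) * ((1 + z) / (1 - z))"
    using yz by simp
  moreover have "0 < (1 + y) / (1 - y)" "0 < (1 + z) / (1 - z)"
    using assms by auto
  ultimately show ?thesis
    unfolding artanh_def by (simp add: ln_mult add_divide_distrib)
qed

lemma add_divide_one_plus_mult_less_1:
  fixes y z :: real
  assumes "0 \<le> y" "y < 1" "0 \<le> z" "z < 1"
  shows "(y + z) / (1 + y * z) < 1"
proof -
  have "0 < (1 - y) * (1 - z)"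
    using assms by simp
  then show ?thesis
    using assms by (simp add: field_simps algebra_simps)
qed

lemma poincare_dist_triangle:
  assumes a: "cmod a < 1" and b: "cmod b < 1" and c: "cmod c < 1"
  shows "poincare_dist a c \<le> poincare_dist a b + poincare_dist b c"
proof -
  note ab = pseudo_hyp_dist_bounds[OF a b] and bc = pseudo_hyp_dist_bounds[OF b c]
  have "poincare_dist a c
      \<le> artanh ((pseudo_hyp_dist a b + pseudo_hyp_dist b c) / (1 + pseudo_hyp_dist a b * pseudo_hyp_dist b c))"
    unfolding poincare_dist_def
    using pseudo_hyp_dist_triangle[OF a b c] ab bc pseudo_hyp_dist_bounds[OF a c]
      add_divide_one_plus_mult_less_1[of "pseudo_hyp_dist a b" "pseudo_hyp_dist b c"]
    by (intro artanh_mono) auto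
  also have "\<dots> = poincare_dist a b + poincare_dist b c"
    unfolding poincare_dist_def using ab bc by (rule artanh_add)
  finally show ?thesis .
qed

lemma poincare_dist_self [simp]: "poincare_dist a a = 0"
  by (simp add: poincare_dist_def pseudo_hyp_dist_def)

text \<open>The Busemann-type difference \<open>\<rho>(a, b) - \<rho>(0, b)\<close> of Poincare distances, whose
  limits as \<open>b\<close> tends to the circle define the horoballs, is
  \<open>ln (|1 - cnj a * b|\<^sup>2 / (1 - |a|\<^sup>2)) / 2\<close> up to an error of at most \<open>ln 2\<close>.\<close>

lemma poincare_dist_diff_eq:
  assumes a: "cmod a < 1" and b: "cmod b < 1"
  shows "poincare_dist a b - poincare_dist 0 b
    = (1/2) * ln ((1 + pseudo_hyp_dist a b)\<^sup>2 * (cmod (1 - cnj a * b))\<^sup>2 / ((1 - (cmod a)\<^sup>2) * (1 + cmod b)\<^sup>2))"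
proof -
  define d where "d = pseudo_hyp_dist a b"
  define s where "s = cmod b"
  define A where "A = 1 - (cmod a)\<^sup>2"
  define E where "E = (cmod (1 - cnj a * b))\<^sup>2"
  have d: "0 \<le> d" "d < 1"
    using pseudo_hyp_dist_bounds[OF a b] by (auto simp: d_def)
  have s: "0 \<le> s" "s < 1"
    using b by (auto simp: s_def)
  have A: "0 < A"
    using a by (simp add: A_def abs_square_less_1)
  have nz: "1 - cnj a * b \<noteq> 0"
    using one_minus_cnj_mult_nonzero a b by simp
  then have E: "0 < E"
    by (simp add: E_def)
  have "1 - d\<^sup>2 = A * (1 - s\<^sup>2) / E"
    using one_minus_pseudo_hyp_dist_sq[OF nz] by (simp add: d_def A_def s_def E_def)
  then have rel: "(1 - d) * (1 + d) * E = A * (1 - s) * (1 + s)"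
    using E by (simp add: field_simps power2_eq_square algebra_simps)
  have "poincare_dist a b - poincare_dist 0 b = (1/2) * (ln ((1 + d) / (1 - d)) - ln ((1 + s) / (1 - s)))"
    by (simp add: poincare_dist_def artanh_def d_def s_def pseudo_hyp_dist_def algebra_simps)
  also have "\<dots> = (1/2) * ln (((1 + d) / (1 - d)) / ((1 + s) / (1 - s)))"
    using d s ln_divide_pos[of "(1 + d) / (1 - d)" "(1 + s) / (1 - s)"] by simp
  also have "((1 + d) / (1 - d)) / ((1 + s) / (1 - s)) = ((1 + d) * (1 - s)) / ((1 - d) * (1 + s))"
    using d s by (simp add: field_simps)
  also have "\<dots> = (1 + d)\<^sup>2 * E / (A * (1 + s)\<^sup>2)"
  proof (subst frac_eq_eq)
    have "(1 + d)\<^sup>2 * E * ((1 - d) * (1 + s)) = (1 + d) * (1 + s) * ((1 - d) * (1 + d) * E)"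
      by (simp add: power2_eq_square algebra_simps)
    also have "\<dots> = (1 + d) * (1 - s) * (A * (1 + s)\<^sup>2)"
      unfolding rel by (simp add: power2_eq_square algebra_simps)
    finally show "(1 + d) * (1 - s) * (A * (1 + s)\<^sup>2) = (1 + d)\<^sup>2 * E * ((1 - d) * (1 + s))"
      by simp
  qed (use d s A in auto)
  finally show ?thesis
    by (simp add: d_def E_def A_def s_def)
qed

lemma poincare_dist_diff_lower_bound:
  assumes a: "cmod a < 1" and b: "cmod b < 1" and \<delta>: "0 < \<delta>" "\<delta> \<le> cmod (b - a)"
  shows "(1/2) * ln (\<delta>\<^sup>2 / (4 * (1 - (cmod a)\<^sup>2))) \<le> poincare_dist a b - poincare_dist 0 b"
proof -
  define d where "d = pseudo_hyp_dist a b"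
  define A where "A = 1 - (cmod a)\<^sup>2"
  define E where "E = (cmod (1 - cnj a * b))\<^sup>2"
  have A: "0 < A"
    using a by (simp add: A_def abs_square_less_1)
  have d1: "1 \<le> (1 + d)\<^sup>2"
    using pseudo_hyp_dist_bounds[OF a b] by (simp add: d_def)
  have "0 < 1 + cmod b"
    by (smt (verit) norm_ge_zero)
  then have b4: "0 < (1 + cmod b)\<^sup>2" "(1 + cmod b)\<^sup>2 \<le> 4"
    using b power_mono[of "1 + cmod b" 2 2] by simp_all
  have "E - (cmod (b - a))\<^sup>2 = A * (1 - (cmod b)\<^sup>2)"
    using norm_one_minus_cnj_mult_sq[of a b] by (simp add: E_def A_def norm_minus_commute)
  moreover have "0 \<le> A * (1 - (cmod b)\<^sup>2)"
    using A b by (simp add: abs_square_le_1 less_imp_le)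
  ultimately have "(cmod (b - a))\<^sup>2 \<le> E"
    by linarith
  moreover have "\<delta>\<^sup>2 \<le> (cmod (b - a))\<^sup>2"
    using \<delta> by (simp add: power_mono)
  ultimately have "\<delta>\<^sup>2 / (4 * A) \<le> E / (4 * A)"
    using A by (simp add: divide_right_mono)
  also have "\<dots> \<le> E / (A * (1 + cmod b)\<^sup>2)"
    using A b4 by (intro divide_left_mono) (auto simp: E_def)
  also have "\<dots> \<le> (1 + d)\<^sup>2 * E / (A * (1 + cmod b)\<^sup>2)"
    using A b4 mult_right_mono[OF d1, of E] by (intro divide_right_mono) (auto simp: E_def)
  finally have "ln (\<delta>\<^sup>2 / (4 * A)) \<le> ln ((1 + d)\<^sup>2 * E / (A * (1 + cmod b)\<^sup>2))"
    using \<delta> A by (intro ln_mono) auto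
  then show ?thesis
    using poincare_dist_diff_eq[OF a b] by (simp add: d_def E_def A_def)
qed

lemma poincare_dist_diff_upper_bound:
  assumes a: "cmod a < 1" and b: "cmod b < 1"
  shows "poincare_dist a b - poincare_dist 0 b \<le> (1/2) * ln (4 * (cmod (1 - cnj a * b))\<^sup>2 / (1 - (cmod a)\<^sup>2))"
proof -
  define d where "d = pseudo_hyp_dist a b"
  define A where "A = 1 - (cmod a)\<^sup>2"
  define E where "E = (cmod (1 - cnj a * b))\<^sup>2"
  have d: "0 \<le> d" "d < 1"
    using pseudo_hyp_dist_bounds[OF a b] by (auto simp: d_def)
  have A: "0 < A"
    using a by (simp add: A_def abs_square_less_1)
  have E: "0 < E"
    using one_minus_cnj_mult_nonzero a b by (simp add: E_def)
  have d4: "(1 + d)\<^sup>2 \<le> 4"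
    using d power_mono[of "1 + d" 2 2] by simp
  have b1: "1 \<le> (1 + cmod b)\<^sup>2" "0 < (1 + cmod b)\<^sup>2"
    by (smt (verit) norm_ge_zero one_le_power)+
  have "(1 + d)\<^sup>2 * E / (A * (1 + cmod b)\<^sup>2) \<le> 4 * E / (A * (1 + cmod b)\<^sup>2)"
    using d4 E A b1 by (intro divide_right_mono mult_right_mono) auto
  also have "\<dots> \<le> 4 * E / A"
    using A E b1 by (intro divide_left_mono) (auto simp: mult_le_cancel_left1 intro!: mult_pos_pos)
  finally have "ln ((1 + d)\<^sup>2 * E / (A * (1 + cmod b)\<^sup>2)) \<le> ln (4 * E / A)"
    using d E A b1 by (intro ln_mono) (auto intro!: divide_pos_pos mult_pos_pos)
  then show ?thesis
    using poincare_dist_diff_eq[OF a b] by (simp add: d_def E_def A_def)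
qed

lemma poincare_dist_diff_radial_upper_bound:
  assumes e: "cmod e = 1" and ts: "0 \<le> t" "t < s" "s < 1"
  shows "poincare_dist (of_real t * e) (of_real s * e) - poincare_dist 0 (of_real s * e)
    \<le> (1/2) * ln (4 * (1 - t\<^sup>2))"
proof -
  define a where "a = of_real t * e"
  define b where "b = of_real s * e"
  have a: "cmod a < 1" "(cmod a)\<^sup>2 = t\<^sup>2" and b: "cmod b < 1"
    using e ts by (simp_all add: a_def b_def norm_mult)
  have "t * s \<le> 1 * s" "t * t \<le> t * s"
    using ts by (intro mult_right_mono mult_left_mono; simp)+
  then have ts': "0 < 1 - t * s" "1 - t * s \<le> 1 - t\<^sup>2"
    using ts unfolding power2_eq_square by linarith+
  have t2: "0 < 1 - t\<^sup>2"
    using ts by (simp add: abs_square_less_1)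
  have "cnj e * e = 1"
    using e by (metis complex_norm_square mult.commute norm_one of_real_1 power_one)
  then have "cnj a * b = of_real (t * s)"
    by (simp add: a_def b_def mult.assoc mult.left_commute)
  then have "cmod (1 - cnj a * b) = 1 - t * s"
    using ts'(1) by (metis abs_of_pos norm_of_real of_real_1 of_real_diff)
  then have "4 * (cmod (1 - cnj a * b))\<^sup>2 / (1 - (cmod a)\<^sup>2) \<le> 4 * (1 - t\<^sup>2)\<^sup>2 / (1 - t\<^sup>2)"
    using ts' t2 a(2) by (simp del: of_real_mult) (intro divide_right_mono mult_left_mono power_mono; simp)
  also have "\<dots> = 4 * (1 - t\<^sup>2)"
    using t2 by (simp add: power2_eq_square)
  finally have "ln (4 * (cmod (1 - cnj a * b))\<^sup>2 / (1 - (cmod a)\<^sup>2)) \<le> ln (4 * (1 - t\<^sup>2))"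
    using ts'(1) t2 a(2) \<open>cmod (1 - cnj a * b) = 1 - t * s\<close> by (intro ln_mono) simp_all
  then show ?thesis
    using poincare_dist_diff_upper_bound[OF a(1) b] by (simp add: a_def b_def)
qed

section \<open>The Kobayashi distance of a domain biholomorphic to the disc\<close>

locale disc_uniformization =
  fixes \<Omega> :: "complex set" and \<psi> g :: "complex \<Rightarrow> complex"
  assumes psi_holomorphic: "\<psi> holomorphic_on ball 0 1"
    and psi_in: "\<And>a. a \<in> ball 0 1 \<Longrightarrow> \<psi> a \<in> \<Omega>"
    and g_holomorphic: "g holomorphic_on \<Omega>"
    and g_in: "\<And>w. w \<in> \<Omega> \<Longrightarrow> g w \<in> ball 0 1"
    and g_psi: "\<And>a. a \<in> ball 0 1 \<Longrightarrow> g (\<psi> a) = a"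
    and psi_g: "\<And>w. w \<in> \<Omega> \<Longrightarrow> \<psi> (g w) = w"
begin

lemma psi_image: "\<psi> ` ball 0 1 = \<Omega>"
proof
  show "\<Omega> \<subseteq> \<psi> ` ball 0 1"
    using psi_g g_in by (metis image_eqI subsetI)
qed (use psi_in in blast)

lemma open_domain: "open \<Omega>"
proof -
  have "inj_on \<psi> (ball 0 1)"
    by (rule inj_on_inverseI[of _ g]) (rule g_psi)
  then show ?thesis
    using open_mapping_thm3[OF psi_holomorphic open_ball] psi_image by simp
qed

lemma poincare_dist_le_disc_dist0:
  assumes fh: "f holomorphic_on ball 0 1" and fi: "f ` ball 0 1 \<subseteq> \<Omega>" and t: "t \<in> ball 0 1"
  shows "poincare_dist (g (f 0)) (g (f t)) \<le> disc_dist0 t"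
proof -
  define a where "a = g (f 0)"
  have "f 0 \<in> \<Omega>" "f t \<in> \<Omega>"
    using fi t by auto
  then have a: "cmod a < 1" and b: "cmod (g (f t)) < 1"
    using g_in by (simp_all add: a_def)
  define u where "u = (\<lambda>s. disc_moebius a (g (f s)))"
  have gf: "(g \<circ> f) holomorphic_on ball 0 1"
    by (rule holomorphic_on_compose_gen[OF fh g_holomorphic fi])
  have "u holomorphic_on ball 0 1"
    unfolding u_def
    by (rule holomorphic_on_compose_gen[OF gf disc_moebius_holomorphic[OF a], unfolded o_def])
       (use g_in fi in auto)
  moreover have "u 0 = 0"
    by (simp add: u_def a_def)
  moreover have "cmod (u s) < 1" if "cmod s < 1" for s
    using disc_moebius_norm_less_1[OF a, of "g (f s)"] g_in[of "f s"] fi that by (force simp: u_def)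
  ultimately have "cmod (u t) \<le> cmod t"
    using Schwarz_Lemma(1) t by simp
  then have "pseudo_hyp_dist a (g (f t)) \<le> cmod t"
    by (simp add: u_def norm_disc_moebius_eq_pseudo_hyp_dist)
  then have "artanh (pseudo_hyp_dist a (g (f t))) \<le> artanh (cmod t)"
    using pseudo_hyp_dist_bounds[OF a b] t by (intro artanh_mono) auto
  then show ?thesis
    by (simp add: a_def disc_dist0_eq_artanh poincare_dist_def)
qed

text \<open>By Schwarz's lemma the Lempert function of the disc is the Poincare distance, and the
  biholomorphism \<open>\<psi>\<close> transports it.\<close>
lemma lempert_eq_poincare_dist:
  assumes z: "z \<in> \<Omega>" and w: "w \<in> \<Omega>"
  shows "lempert \<Omega> z w = poincare_dist (g z) (g w)"
  unfolding lempert_def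
proof (rule cInf_eq_minimum)
  define a where "a = g z"
  define b where "b = g w"
  have a: "cmod a < 1" and b: "cmod b < 1"
    using g_in z w by (auto simp: a_def b_def)
  define f where "f = (\<lambda>s. \<psi> (disc_moebius (-a) s))"
  have ma: "cmod (-a) < 1"
    using a by simp
  have "f holomorphic_on ball 0 1"
    unfolding f_def
    by (rule holomorphic_on_compose_gen[OF disc_moebius_holomorphic[OF ma] psi_holomorphic, unfolded o_def])
       (use disc_moebius_norm_less_1[OF ma] in auto)
  moreover have "f ` ball 0 1 \<subseteq> \<Omega>"
    using disc_moebius_norm_less_1[OF ma] psi_in by (auto simp: f_def)
  moreover have "f 0 = z" "f (disc_moebius a b) = w"
    using psi_g z w disc_moebius_inverse[OF a less_imp_le[OF b]] by (simp_all add: f_def a_def b_def)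
  moreover have "disc_moebius a b \<in> ball 0 1"
    using disc_moebius_norm_less_1[OF a b] by simp
  moreover have "disc_dist0 (disc_moebius a b) = poincare_dist (g z) (g w)"
    by (simp add: disc_dist0_eq_artanh poincare_dist_def norm_disc_moebius_eq_pseudo_hyp_dist a_def b_def)
  ultimately show "poincare_dist (g z) (g w) \<in> {disc_dist0 t | t f. t \<in> ball 0 1 \<and>
      f holomorphic_on ball 0 1 \<and> f ` ball 0 1 \<subseteq> \<Omega> \<and> f 0 = z \<and> f t = w}"
    unfolding mem_Collect_eq by (intro exI[of _ "disc_moebius a b"] exI[of _ f]) auto
next
  fix d
  assume "d \<in> {disc_dist0 t | t f. t \<in> ball 0 1 \<and>
      f holomorphic_on ball 0 1 \<and> f ` ball 0 1 \<subseteq> \<Omega> \<and> f 0 = z \<and> f t = w}"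
  then obtain t f where "t \<in> ball 0 1" "f holomorphic_on ball 0 1" "f ` ball 0 1 \<subseteq> \<Omega>"
    "f 0 = z" "f t = w" "d = disc_dist0 t"
    by blast
  then show "poincare_dist (g z) (g w) \<le> d"
    using poincare_dist_le_disc_dist0[of f t] by simp
qed

lemma poincare_dist_le_chain_sum:
  assumes "\<forall>i\<le>n. p i \<in> \<Omega>"
  shows "poincare_dist (g (p 0)) (g (p n)) \<le> (\<Sum>i<n. lempert \<Omega> (p i) (p (Suc i)))"
  using assms
proof (induction n)
  case 0
  then show ?case by simp
next
  case (Suc n)
  have "poincare_dist (g (p 0)) (g (p (Suc n)))
      \<le> poincare_dist (g (p 0)) (g (p n)) + poincare_dist (g (p n)) (g (p (Suc n)))"
    using Suc.prems g_in by (intro poincare_dist_triangle) auto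
  also have "\<dots> \<le> (\<Sum>i<n. lempert \<Omega> (p i) (p (Suc i))) + lempert \<Omega> (p n) (p (Suc n))"
    using Suc.IH Suc.prems lempert_eq_poincare_dist[of "p n" "p (Suc n)"] by simp
  finally show ?case by simp
qed

lemma kobayashi_eq_poincare_dist:
  assumes z: "z \<in> \<Omega>" and w: "w \<in> \<Omega>"
  shows "kobayashi \<Omega> z w = poincare_dist (g z) (g w)"
  unfolding kobayashi_def
proof (rule cInf_eq_minimum)
  define p where "p = (\<lambda>i::nat. if i = 0 then z else w)"
  have "(\<Sum>i<1. lempert \<Omega> (p i) (p (Suc i))) = poincare_dist (g z) (g w)"
    using lempert_eq_poincare_dist[OF z w] by (simp add: p_def)
  moreover have "p 0 = z \<and> p 1 = w \<and> (\<forall>i\<le>1. p i \<in> \<Omega>)"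
    using z w by (simp add: p_def)
  ultimately show "poincare_dist (g z) (g w) \<in> {(\<Sum>i<n. lempert \<Omega> (p i) (p (Suc i))) | n p.
       p 0 = z \<and> p n = w \<and> (\<forall>i\<le>n. p i \<in> \<Omega>)}"
    unfolding mem_Collect_eq by (intro exI[of _ 1] exI[of _ p]) auto
qed (use poincare_dist_le_chain_sum in auto)

end

lemma biholomorphism_from_disc_uniformizes:
  assumes holo: "\<psi> holomorphic_on ball 0 1" and bij: "bij_betw \<psi> (ball 0 1) \<Omega>"
  obtains g where "disc_uniformization \<Omega> \<psi> g"
proof -
  have im: "\<psi> ` ball 0 1 = \<Omega>"
    using bij by (rule bij_betw_imp_surj_on)
  obtain g where gh: "g holomorphic_on \<psi> ` ball 0 1" and gp: "\<And>z. z \<in> ball 0 1 \<Longrightarrow> g (\<psi> z) = z"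
    using holomorphic_has_inverse[OF holo open_ball bij_betw_imp_inj_on[OF bij]] by metis
  have "disc_uniformization \<Omega> \<psi> g"
  proof
    show "g holomorphic_on \<Omega>"
      using gh im by simp
    show "\<psi> (g w) = w" "g w \<in> ball 0 1" if "w \<in> \<Omega>" for w
      using that im gp by auto
  qed (use holo im gp in auto)
  then show ?thesis ..
qed

section \<open>An explicit Riemann map of the slit disc\<close>

definition slit_disc :: "complex set" where
  "slit_disc = ball 0 1 - {complex_of_real t | t. 0 \<le> t \<and> t < 1}"

text \<open>The Cayley map \<open>z \<mapsto> \<i>(1 + z)/(1 - z)\<close> sends the disc onto the upper half-plane, its
  principal square root \<open>root_plus z / root_minus z\<close> lies in the first quadrant,
  \<open>\<rho> \<mapsto> (\<rho> - 1)/(\<rho> + 1)\<close> sends the first quadrant onto the upper half-disc, and squaring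
  opens the upper half-disc to the slit disc. Numerator and denominator are kept apart so that
  the formula makes sense, and is continuous, on the whole closed disc.\<close>

definition root_plus :: "complex \<Rightarrow> complex" where
  "root_plus z = csqrt (\<i> * (1 + z))"

definition root_minus :: "complex \<Rightarrow> complex" where
  "root_minus z = csqrt (1 - z)"

definition half_disc_map :: "complex \<Rightarrow> complex" where
  "half_disc_map z = (root_plus z - root_minus z) / (root_plus z + root_minus z)"

definition slit_map :: "complex \<Rightarrow> complex" where
  "slit_map z = (half_disc_map z)\<^sup>2"

lemma Re_csqrt_pos_if_Im_nonzero: "Im w \<noteq> 0 \<Longrightarrow> 0 < Re (csqrt w)"
proof -
  assume "Im w \<noteq> 0"
  then have "\<bar>Re w\<bar>\<^sup>2 < (cmod w)\<^sup>2"
    by (simp add: cmod_power2)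
  then have "\<bar>Re w\<bar> < cmod w"
    by (rule power2_less_imp_less) simp
  then show ?thesis by simp
qed

lemma Re_csqrt_pos_if_Re_pos: "0 < Re w \<Longrightarrow> 0 < Re (csqrt w)"
  using abs_Re_le_cmod[of w] by simp

lemma Im_csqrt_pos: "0 < Im w \<Longrightarrow> 0 < Im (csqrt w)"
proof -
  assume "0 < Im w"
  moreover have "\<bar>Re w\<bar>\<^sup>2 < (cmod w)\<^sup>2"
    using \<open>0 < Im w\<close> by (simp add: cmod_power2)
  then have "\<bar>Re w\<bar> < cmod w"
    by (rule power2_less_imp_less) simp
  ultimately show ?thesis by simp
qed

lemma root_plus_times_cnj_root_minus:
  assumes z: "cmod z < 1"
  shows "0 < Re (root_plus z * cnj (root_minus z))" "0 < Im (root_plus z * cnj (root_minus z))"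
proof -
  obtain p q where A: "root_plus z = Complex p q"
    by (metis complex.exhaust)
  obtain u v where B: "root_minus z = Complex u v"
    by (metis complex.exhaust)
  have rez: "\<bar>Re z\<bar> < 1"
    using z abs_Re_le_cmod[of z] by linarith
  have zz: "(Re z)\<^sup>2 + (Im z)\<^sup>2 < 1"
    using z by (simp add: cmod_def)
  have im: "Im (\<i> * (1 + z)) > 0"
    using rez by simp
  then have "0 < Re (root_plus z)" "0 < Im (root_plus z)"
    unfolding root_plus_def using Re_csqrt_pos_if_Im_nonzero[of "\<i> * (1 + z)"] Im_csqrt_pos[OF im] by auto
  then have p: "p > 0" and q: "q > 0"
    using A by auto
  have "0 < Re (root_minus z)"
    unfolding root_minus_def by (rule Re_csqrt_pos_if_Re_pos) (use rez in simp)
  then have u: "u > 0"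
    using B by simp
  have "(root_plus z)\<^sup>2 = \<i> * (1 + z)" "(root_minus z)\<^sup>2 = 1 - z"
    by (simp_all add: root_plus_def root_minus_def)
  then have e: "p * p - q * q = - Im z" "2 * p * q = 1 + Re z" "u * u - v * v = 1 - Re z" "2 * u * v = - Im z"
    unfolding A B by (simp_all add: power2_eq_square complex_eq_iff)
  have "2 * ((p * u + q * v) * (q * u - p * v)) = (2 * p * q) * (u * u - v * v) - (2 * u * v) * (p * p - q * q)"
    by (simp add: algebra_simps)
  also have "\<dots> = 1 - (Re z)\<^sup>2 - (Im z)\<^sup>2"
    unfolding e by (simp add: power2_eq_square algebra_simps)
  finally have pos: "(p * u + q * v) * (q * u - p * v) > 0"
    using zz by linarith
  have "p * u + q * v > 0 \<and> q * u - p * v > 0"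
  proof (cases "v \<le> 0")
    case True
    then have "q * u - p * v > 0"
      using p q u by (smt (verit) mult_pos_pos mult_nonneg_nonpos)
    then show ?thesis
      using pos by (simp add: zero_less_mult_iff)
  next
    case False
    then have "p * u + q * v > 0"
      using p q u by (smt (verit) mult_pos_pos)
    then show ?thesis
      using pos by (simp add: zero_less_mult_iff)
  qed
  then show "0 < Re (root_plus z * cnj (root_minus z))" "0 < Im (root_plus z * cnj (root_minus z))"
    by (simp_all add: A B algebra_simps)
qed

lemma half_disc_map_bounds:
  assumes z: "cmod z < 1"
  shows "0 < Im (half_disc_map z)" "cmod (half_disc_map z) < 1"
proof -
  obtain p q where A: "root_plus z = Complex p q"
    by (metis complex.exhaust)
  obtain u v where B: "root_minus z = Complex u v"
    by (metis complex.exhaust)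
  have k1: "p * u + q * v > 0" and k2: "q * u - p * v > 0"
    using root_plus_times_cnj_root_minus[OF z] by (simp_all add: A B)
  have d: "(p + u)\<^sup>2 + (q + v)\<^sup>2 > (p - u)\<^sup>2 + (q - v)\<^sup>2"
    using k1 by (simp add: power2_eq_square algebra_simps)
  have dpos: "(p + u)\<^sup>2 + (q + v)\<^sup>2 > 0"
    using d by (smt (verit) sum_power2_ge_zero)
  have "Im (half_disc_map z) = ((p + u) * (q - v) - (q + v) * (p - u)) / ((p + u)\<^sup>2 + (q + v)\<^sup>2)"
    by (simp add: half_disc_map_def A B Im_divide)
  also have "(p + u) * (q - v) - (q + v) * (p - u) = 2 * (q * u - p * v)"
    by (simp add: algebra_simps)
  finally show "0 < Im (half_disc_map z)"
    using k2 dpos by simp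
  have "cmod (root_plus z - root_minus z) < cmod (root_plus z + root_minus z)"
    using d by (simp add: A B cmod_def power2_eq_square)
  then show "cmod (half_disc_map z) < 1"
    by (simp add: half_disc_map_def norm_divide divide_less_eq_1)
qed

lemma Re_csqrt_eq_0_imp_nonpos_Reals: "Re (csqrt w) = 0 \<Longrightarrow> w \<in> \<real>\<^sub>\<le>\<^sub>0"
proof -
  assume "Re (csqrt w) = 0"
  then have "cmod w + Re w = 0"
    by simp
  then have "(cmod w)\<^sup>2 = (Re w)\<^sup>2" "Re w \<le> 0"
    using norm_ge_zero[of w] by (metis add_eq_0_iff power2_minus, linarith)
  then show ?thesis
    by (simp add: cmod_power2 complex_nonpos_Reals_iff)
qed

lemma i_one_plus_notin_nonpos_Reals:
  assumes "cmod z \<le> 1" "z \<noteq> -1"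
  shows "\<i> * (1 + z) \<notin> \<real>\<^sub>\<le>\<^sub>0"
proof
  assume "\<i> * (1 + z) \<in> \<real>\<^sub>\<le>\<^sub>0"
  then have "Re z = -1"
    by (auto simp: complex_nonpos_Reals_iff)
  moreover have "(Re z)\<^sup>2 + (Im z)\<^sup>2 \<le> 1"
    using assms by (simp add: cmod_power2 power_le_one flip: cmod_power2)
  ultimately have "Im z = 0"
    by simp
  then show False
    using \<open>Re z = -1\<close> assms(2) by (simp add: complex_eq_iff)
qed

lemma one_minus_notin_nonpos_Reals:
  assumes "cmod z \<le> 1" "z \<noteq> 1"
  shows "1 - z \<notin> \<real>\<^sub>\<le>\<^sub>0"
  using assms abs_Re_le_cmod[of z] by (auto simp: complex_nonpos_Reals_iff complex_eq_iff)

lemma root_plus_add_root_minus_nonzero: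
  assumes "cmod z \<le> 1"
  shows "root_plus z + root_minus z \<noteq> 0"
proof
  assume "root_plus z + root_minus z = 0"
  then have "Re (root_plus z) + Re (root_minus z) = 0"
    by (metis plus_complex.simps(1) zero_complex.simps(1))
  then have "Re (root_plus z) = 0" "Re (root_minus z) = 0"
    using Re_csqrt unfolding root_plus_def root_minus_def by (smt (verit))+
  then have "\<i> * (1 + z) \<in> \<real>\<^sub>\<le>\<^sub>0" "1 - z \<in> \<real>\<^sub>\<le>\<^sub>0"
    unfolding root_plus_def root_minus_def by (auto intro: Re_csqrt_eq_0_imp_nonpos_Reals)
  then show False
    using i_one_plus_notin_nonpos_Reals one_minus_notin_nonpos_Reals assms by force
qed

lemma slit_map_holomorphic: "slit_map holomorphic_on ball 0 1"
proof -
  have "\<i> * (1 + z) \<notin> \<real>\<^sub>\<le>\<^sub>0" "1 - z \<notin> \<real>\<^sub>\<le>\<^sub>0" "root_plus z + root_minus z \<noteq> 0"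
    if "z \<in> ball 0 1" for z :: complex
  proof -
    have "z \<noteq> -1" "z \<noteq> 1" "cmod z \<le> 1"
      using that by auto
    then show "\<i> * (1 + z) \<notin> \<real>\<^sub>\<le>\<^sub>0" "1 - z \<notin> \<real>\<^sub>\<le>\<^sub>0" "root_plus z + root_minus z \<noteq> 0"
      using i_one_plus_notin_nonpos_Reals one_minus_notin_nonpos_Reals root_plus_add_root_minus_nonzero
      by blast+
  qed
  then show ?thesis
    unfolding slit_map_def half_disc_map_def root_plus_def root_minus_def
    by (intro holomorphic_intros) auto
qed

lemma isCont_csqrt_0: "isCont csqrt 0"
proof -
  have "((\<lambda>z::complex. cmod z) \<longlongrightarrow> 0) (at 0)"
    using tendsto_norm_zero[OF tendsto_ident_at[of 0 UNIV]] by simp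
  then have "((\<lambda>z::complex. sqrt (cmod z)) \<longlongrightarrow> sqrt 0) (at 0)"
    by (rule tendsto_real_sqrt)
  then have "((\<lambda>z. norm (csqrt z)) \<longlongrightarrow> 0) (at 0)"
    by simp
  then have "(csqrt \<longlongrightarrow> 0) (at 0)"
    by (rule tendsto_norm_zero_cancel)
  then show ?thesis
    unfolding isCont_def by simp
qed

lemma continuous_on_slit_map: "continuous_on (cball 0 1) slit_map"
proof (rule continuous_at_imp_continuous_on, rule ballI)
  fix z :: complex
  assume "z \<in> cball 0 1"
  then have z: "cmod z \<le> 1"
    by simp
  have csqrt: "isCont csqrt w" if "w \<notin> \<real>\<^sub>\<le>\<^sub>0 \<or> w = 0" for w
    using that continuous_at_csqrt isCont_csqrt_0 by auto
  have "\<i> * (1 + z) \<notin> \<real>\<^sub>\<le>\<^sub>0 \<or> \<i> * (1 + z) = 0" "1 - z \<notin> \<real>\<^sub>\<le>\<^sub>0 \<or> 1 - z = 0"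
    using i_one_plus_notin_nonpos_Reals[OF z] one_minus_notin_nonpos_Reals[OF z] by force+
  then have "isCont root_plus z" "isCont root_minus z"
    unfolding root_plus_def root_minus_def
    by (auto intro!: continuous_at_compose[OF _ csqrt, unfolded o_def])
  then show "isCont slit_map z"
    unfolding slit_map_def half_disc_map_def
    using root_plus_add_root_minus_nonzero[OF z] by (intro continuous_intros) auto
qed

lemma power2_neq_nonneg_real:
  assumes "0 < Im r" "0 \<le> t"
  shows "r\<^sup>2 \<noteq> complex_of_real t"
proof
  assume "r\<^sup>2 = complex_of_real t"
  then have "2 * Re r * Im r = 0" "Re r * Re r - Im r * Im r = t"
    by (auto simp: power2_eq_square complex_eq_iff)
  moreover have "Im r * Im r > 0"
    using assms by simp
  ultimately show False
    using assms by auto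
qed

lemma slit_map_in_slit_disc:
  assumes "cmod z < 1"
  shows "slit_map z \<in> slit_disc"
proof -
  have "cmod (slit_map z) < 1"
    using half_disc_map_bounds(2)[OF assms] by (simp add: slit_map_def norm_power power_less_one_iff)
  moreover have "slit_map z \<noteq> complex_of_real t" if "0 \<le> t" for t
    using power2_neq_nonneg_real[OF half_disc_map_bounds(1)[OF assms] that] by (simp add: slit_map_def)
  ultimately show ?thesis
    unfolding slit_disc_def by auto
qed

lemma inj_on_slit_map: "inj_on slit_map (ball 0 1)"
proof
  fix z1 z2
  assume z1: "z1 \<in> ball 0 1" and z2: "z2 \<in> ball 0 1" and e: "slit_map z1 = slit_map z2"
  have "half_disc_map z1 = half_disc_map z2 \<or> half_disc_map z1 = - half_disc_map z2"
    using e unfolding slit_map_def by (simp add: power2_eq_iff)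
  moreover have "Im (half_disc_map z1) \<noteq> Im (- half_disc_map z2)"
    using half_disc_map_bounds(1) z1 z2 by (smt (verit) mem_ball_0 uminus_complex.sel(2))
  ultimately have "half_disc_map z1 = half_disc_map z2"
    by auto
  then have "(root_plus z1 - root_minus z1) * (root_plus z2 + root_minus z2)
      = (root_plus z2 - root_minus z2) * (root_plus z1 + root_minus z1)"
    using root_plus_add_root_minus_nonzero z1 z2 by (simp add: half_disc_map_def frac_eq_eq)
  then have "root_plus z1 * root_minus z2 = root_plus z2 * root_minus z1"
    by (simp add: algebra_simps)
  then have "(root_plus z1)\<^sup>2 * (root_minus z2)\<^sup>2 = (root_plus z2)\<^sup>2 * (root_minus z1)\<^sup>2"
    by (metis power_mult_distrib)
  then have "(1 + z1) * (1 - z2) = (1 + z2) * (1 - z1)"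
    by (simp add: root_plus_def root_minus_def)
  then show "z1 = z2"
    by (simp add: algebra_simps)
qed

lemma cayley_in_first_quadrant:
  assumes "0 < Im r" "cmod r < 1"
  shows "0 < Re ((1 + r) / (1 - r))" "0 < Im ((1 + r) / (1 - r))"
proof -
  obtain a b where r: "r = Complex a b"
    by (metis complex.exhaust)
  have b: "0 < b" and ab: "a\<^sup>2 + b\<^sup>2 < 1"
    using assms by (simp_all add: r cmod_def)
  have den: "0 < (1 - a)\<^sup>2 + b\<^sup>2"
    using b by (smt (verit) zero_le_power2 zero_less_power2)
  have "Re ((1 + r) / (1 - r)) = (1 - a\<^sup>2 - b\<^sup>2) / ((1 - a)\<^sup>2 + b\<^sup>2)"
    by (simp add: r Re_divide power2_eq_square algebra_simps)
  then show "0 < Re ((1 + r) / (1 - r))"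
    using ab den by simp
  have "Im ((1 + r) / (1 - r)) = 2 * b / ((1 - a)\<^sup>2 + b\<^sup>2)"
    by (simp add: r Im_divide power2_eq_square algebra_simps)
  then show "0 < Im ((1 + r) / (1 - r))"
    using b den by simp
qed

lemma upper_half_plane_to_disc:
  assumes "0 < Im q"
  shows "cmod ((q - \<i>) / (q + \<i>)) < 1" "\<i> * (1 + (q - \<i>) / (q + \<i>)) / (1 - (q - \<i>) / (q + \<i>)) = q"
proof -
  have qi: "q + \<i> \<noteq> 0" and "cmod (q - \<i>) < cmod (q + \<i>)"
    using assms by (auto simp: complex_eq_iff cmod_def power2_eq_square algebra_simps)
  then show "cmod ((q - \<i>) / (q + \<i>)) < 1"
    by (simp add: norm_divide divide_less_eq_1)
  have "1 - (q - \<i>) / (q + \<i>) = 2 * \<i> / (q + \<i>)" "1 + (q - \<i>) / (q + \<i>) = 2 * q / (q + \<i>)"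
    using qi by (simp_all add: field_simps)
  moreover have "\<i> * (2 * q / X) / (2 * \<i> / X) = q" if "X \<noteq> 0" for X
    using that by (simp add: field_simps)
  ultimately show "\<i> * (1 + (q - \<i>) / (q + \<i>)) / (1 - (q - \<i>) / (q + \<i>)) = q"
    using qi by simp
qed

lemma half_disc_map_surj:
  assumes imr: "0 < Im r" and r: "cmod r < 1"
  obtains w where "cmod w < 1" "half_disc_map w = r"
proof -
  define s where "s = (1 + r) / (1 - r)"
  have "1 - r \<noteq> 0"
    using imr by auto
  then have r_eq: "r = (s - 1) / (s + 1)"
    by (auto simp: s_def field_simps)
  have "0 < Re s" "0 < Im s"
    using cayley_in_first_quadrant[OF imr r] unfolding s_def .
  then have "0 < Im (s\<^sup>2)"
    by (simp add: power2_eq_square)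
  define w where "w = (s\<^sup>2 - \<i>) / (s\<^sup>2 + \<i>)"
  have wn: "cmod w < 1" and ws: "\<i> * (1 + w) / (1 - w) = s\<^sup>2"
    using upper_half_plane_to_disc[OF \<open>0 < Im (s\<^sup>2)\<close>] unfolding w_def by blast+
  define \<rho> where "\<rho> = root_plus w / root_minus w"
  have "root_minus w \<noteq> 0"
    using wn by (auto simp: root_minus_def)
  then have hw: "half_disc_map w = (\<rho> - 1) / (\<rho> + 1)"
    by (simp add: half_disc_map_def \<rho>_def divide_simps)
  have "\<rho>\<^sup>2 = s\<^sup>2"
    using ws by (simp add: \<rho>_def power_divide root_plus_def root_minus_def)
  then have "\<rho> = s \<or> \<rho> = - s"
    by (simp add: power2_eq_iff)
  moreover have "\<rho> \<noteq> - s"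
  proof
    assume "\<rho> = - s"
    then have "half_disc_map w = (- (s + 1)) / (- (s - 1))"
      using hw by (simp add: algebra_simps)
    also have "\<dots> = 1 / r"
      unfolding minus_divide_divide by (simp add: r_eq)
    finally have "Im (half_disc_map w) = - Im r / (cmod r)\<^sup>2"
      by (simp add: Im_divide cmod_power2)
    moreover have "0 < Im (half_disc_map w)"
      using half_disc_map_bounds(1)[OF wn] .
    ultimately show False
      using imr by (simp add: divide_less_0_iff)
  qed
  ultimately have "half_disc_map w = r"
    using hw r_eq by simp
  with wn that show ?thesis
    by blast
qed

lemma slit_map_image: "slit_map ` ball 0 1 = slit_disc"
proof
  show "slit_map ` ball 0 1 \<subseteq> slit_disc"
    using slit_map_in_slit_disc by auto
  show "slit_disc \<subseteq> slit_map ` ball 0 1"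
  proof
    fix z
    assume "z \<in> slit_disc"
    then have z1: "cmod z < 1" and znr: "\<And>t. 0 \<le> t \<Longrightarrow> t < 1 \<Longrightarrow> z \<noteq> complex_of_real t"
      by (auto simp: slit_disc_def)
    have "0 < Re (csqrt (- z))"
    proof (cases "Im z = 0")
      case True
      then have "Re z < 0"
        using znr[of "Re z"] z1 abs_Re_le_cmod[of z] by (force simp: complex_eq_iff)
      then show ?thesis
        by (intro Re_csqrt_pos_if_Re_pos) simp
    next
      case False
      then show ?thesis
        by (intro Re_csqrt_pos_if_Im_nonzero) simp
    qed
    then obtain w where "cmod w < 1" "half_disc_map w = \<i> * csqrt (- z)"
      using half_disc_map_surj[of "\<i> * csqrt (- z)"] z1 by (auto simp: norm_mult)
    moreover have "(\<i> * csqrt (- z))\<^sup>2 = z"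
      by (simp add: power_mult_distrib)
    ultimately show "z \<in> slit_map ` ball 0 1"
      by (metis slit_map_def image_eqI mem_ball_0)
  qed
qed

text \<open>Solving \<open>root_plus \<zeta> / root_minus \<zeta> = (1 + r)/(1 - r)\<close>, i.e.
  \<open>\<i>(1 + \<zeta>)/(1 - \<zeta>) = (1 + r)\<^sup>2/(1 - r)\<^sup>2\<close>, gives the point of the unit circle that
  \<open>half_disc_map\<close> sends to the real number \<open>r \<in> [-1, 1]\<close>.\<close>

definition circle_preimage :: "real \<Rightarrow> complex" where
  "circle_preimage r = (of_real ((1 + r)\<^sup>2) - \<i> * of_real ((1 - r)\<^sup>2)) / (of_real ((1 + r)\<^sup>2) + \<i> * of_real ((1 - r)\<^sup>2))"

lemma csqrt_of_real_power2_mult: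
  assumes "0 \<le> t"
  shows "csqrt (complex_of_real (t\<^sup>2) * w) = complex_of_real t * csqrt w"
proof (rule csqrt_unique)
  show "(complex_of_real t * csqrt w)\<^sup>2 = complex_of_real (t\<^sup>2) * w"
    by (simp add: power_mult_distrib)
  show "0 < Re (complex_of_real t * csqrt w) \<or> Re (complex_of_real t * csqrt w) = 0 \<and> 0 \<le> Im (complex_of_real t * csqrt w)"
  proof (cases "t = 0")
    case False
    then show ?thesis
      using csqrt_principal[of w] assms by auto
  qed simp
qed

lemma circle_preimage:
  assumes r: "-1 \<le> r" "r \<le> 1"
  shows "cmod (circle_preimage r) = 1" "half_disc_map (circle_preimage r) = of_real r"
proof -
  define U where "U = complex_of_real ((1 + r)\<^sup>2)"
  define V where "V = complex_of_real ((1 - r)\<^sup>2)"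
  define D where "D = U + \<i> * V"
  have "(1 + r)\<^sup>2 + (1 - r)\<^sup>2 = 2 + 2 * r\<^sup>2"
    by (simp add: power2_eq_square algebra_simps)
  then have "(1 + r)\<^sup>2 + (1 - r)\<^sup>2 > 0"
    using zero_le_power2[of r] by linarith
  then have D: "D \<noteq> 0"
    by (auto simp: D_def U_def V_def complex_eq_iff)
  have Z: "circle_preimage r = (U - \<i> * V) / D"
    by (simp add: circle_preimage_def D_def U_def V_def)
  have "cmod (U - \<i> * V) = cmod D"
    by (simp add: D_def U_def V_def cmod_def)
  then show "cmod (circle_preimage r) = 1"
    using D by (simp add: Z norm_divide)
  have "1 - circle_preimage r = (D - (U - \<i> * V)) / D" "1 + circle_preimage r = (D + (U - \<i> * V)) / D"
    using D by (simp_all add: Z diff_divide_distrib add_divide_distrib)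
  moreover have "D - (U - \<i> * V) = V * (2 * \<i>)" "D + (U - \<i> * V) = U * 2"
    by (simp_all add: D_def algebra_simps)
  ultimately have e: "1 - circle_preimage r = V * (2 * \<i> / D)" "\<i> * (1 + circle_preimage r) = U * (2 * \<i> / D)"
    by simp_all
  define c where "c = csqrt (2 * \<i> / D)"
  have "root_minus (circle_preimage r) = complex_of_real (1 - r) * c"
    unfolding root_minus_def e c_def V_def using r by (intro csqrt_of_real_power2_mult) simp
  moreover have "root_plus (circle_preimage r) = complex_of_real (1 + r) * c"
    unfolding root_plus_def e c_def U_def using r by (intro csqrt_of_real_power2_mult) simp
  moreover have "c \<noteq> 0"
    using D by (simp add: c_def)
  moreover have "complex_of_real (1 + r) * c - complex_of_real (1 - r) * c = (complex_of_real r * c) * 2"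
    "complex_of_real (1 + r) * c + complex_of_real (1 - r) * c = c * 2"
    by (simp_all add: algebra_simps)
  ultimately show "half_disc_map (circle_preimage r) = of_real r"
    unfolding half_disc_map_def by simp
qed

lemma slit_map_two_circle_preimages:
  assumes "0 < x" "x \<le> 1"
  obtains \<zeta>1 \<zeta>2 where "cmod \<zeta>1 = 1" "cmod \<zeta>2 = 1" "\<zeta>1 \<noteq> \<zeta>2"
    "slit_map \<zeta>1 = complex_of_real x" "slit_map \<zeta>2 = complex_of_real x"
proof
  define t where "t = sqrt x"
  have t: "0 < t" "t \<le> 1" "t\<^sup>2 = x"
    using assms by (auto simp: t_def)
  then show "cmod (circle_preimage t) = 1" "cmod (circle_preimage (-t)) = 1"
    using circle_preimage(1) by auto
  show "slit_map (circle_preimage t) = x" "slit_map (circle_preimage (-t)) = x"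
    using t circle_preimage(2)[of t] circle_preimage(2)[of "-t"] by (simp_all add: slit_map_def flip: of_real_power)
  show "circle_preimage t \<noteq> circle_preimage (-t)"
  proof
    assume "circle_preimage t = circle_preimage (-t)"
    then have "complex_of_real t = complex_of_real (-t)"
      using t circle_preimage(2)[of t] circle_preimage(2)[of "-t"] by simp
    then show False
      using t by simp
  qed
qed

section \<open>The Riemann maps of the slit disc extend continuously to the closed disc\<close>

lemma disc_self_map_fixing_0_with_left_inverse_is_rotation:
  assumes vh: "v holomorphic_on ball 0 1" and uh: "u holomorphic_on ball 0 1"
    and v0: "v 0 = 0" and u0: "u 0 = 0"
    and vn: "\<And>z. cmod z < 1 \<Longrightarrow> cmod (v z) < 1" and un: "\<And>z. cmod z < 1 \<Longrightarrow> cmod (u z) < 1"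
    and uv: "\<And>z. cmod z < 1 \<Longrightarrow> u (v z) = z"
  obtains \<alpha> where "cmod \<alpha> = 1" "\<And>z. cmod z < 1 \<Longrightarrow> v z = \<alpha> * z"
proof -
  define z0 :: complex where "z0 = 1/2"
  have z0: "cmod z0 < 1" "z0 \<noteq> 0"
    by (auto simp: z0_def)
  have "cmod (v z0) \<le> cmod z0"
    using Schwarz_Lemma(1)[OF vh v0 vn z0(1)] .
  moreover have "cmod (u (v z0)) \<le> cmod (v z0)"
    using Schwarz_Lemma(1)[OF uh u0 un vn[OF z0(1)]] .
  ultimately have "cmod (v z0) = cmod z0"
    using uv[OF z0(1)] by simp
  then show ?thesis
    using Schwarz_Lemma(3)[OF vh v0 vn z0(1)] z0 that by blast
qed

lemma disc_biholomorphism_eq_rotation_moebius: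
  assumes mh: "m holomorphic_on ball 0 1" and nh: "n holomorphic_on ball 0 1"
    and mi: "\<And>z. z \<in> ball 0 1 \<Longrightarrow> m z \<in> ball 0 1" and ni: "\<And>z. z \<in> ball 0 1 \<Longrightarrow> n z \<in> ball 0 1"
    and mn: "\<And>z. z \<in> ball 0 1 \<Longrightarrow> m (n z) = z" and nm: "\<And>z. z \<in> ball 0 1 \<Longrightarrow> n (m z) = z"
  obtains \<alpha> a where "cmod \<alpha> = 1" "cmod a < 1" "\<And>z. z \<in> ball 0 1 \<Longrightarrow> m z = \<alpha> * disc_moebius a z"
proof -
  define a where "a = n 0"
  have a: "cmod a < 1" and ma: "cmod (-a) < 1"
    using ni[of 0] by (simp_all add: a_def)
  define v where "v = (\<lambda>z. m (disc_moebius (-a) z))"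
  define u where "u = (\<lambda>z. disc_moebius a (n z))"
  have vh: "v holomorphic_on ball 0 1"
    unfolding v_def
    by (rule holomorphic_on_compose_gen[OF disc_moebius_holomorphic[OF ma] mh, unfolded o_def])
       (use disc_moebius_norm_less_1[OF ma] in auto)
  have uh: "u holomorphic_on ball 0 1"
    unfolding u_def
    by (rule holomorphic_on_compose_gen[OF nh disc_moebius_holomorphic[OF a], unfolded o_def])
       (use ni in auto)
  have v0: "v 0 = 0" and u0: "u 0 = 0"
    using mn[of 0] by (simp_all add: v_def u_def a_def)
  have vn: "cmod (v z) < 1" if "cmod z < 1" for z
    using mi[of "disc_moebius (-a) z"] disc_moebius_norm_less_1[OF ma that] by (simp add: v_def)
  have un: "cmod (u z) < 1" if "cmod z < 1" for z
    using ni[of z] disc_moebius_norm_less_1[OF a, of "n z"] that by (simp add: u_def)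
  have uv: "u (v z) = z" if "cmod z < 1" for z
    using nm[of "disc_moebius (-a) z"] disc_moebius_norm_less_1[OF ma that]
      disc_moebius_inverse[of "-a" z] ma that
    by (simp add: v_def u_def)
  obtain \<alpha> where \<alpha>: "cmod \<alpha> = 1" "\<And>z. cmod z < 1 \<Longrightarrow> v z = \<alpha> * z"
    using disc_self_map_fixing_0_with_left_inverse_is_rotation[OF vh uh v0 u0 vn un uv] by blast
  have "m z = \<alpha> * disc_moebius a z" if "z \<in> ball 0 1" for z
    using \<alpha>(2)[of "disc_moebius a z"] disc_moebius_inverse[OF a, of z] disc_moebius_norm_less_1[OF a, of z] that
    by (simp add: v_def)
  with \<alpha>(1) a that show ?thesis
    by blast
qed

lemma slit_disc_riemann_map_eq:
  assumes holo: "\<psi> holomorphic_on ball 0 1" and bij: "bij_betw \<psi> (ball 0 1) slit_disc"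
  obtains \<alpha> a where "cmod \<alpha> = 1" "cmod a < 1" "\<And>z. z \<in> ball 0 1 \<Longrightarrow> \<psi> z = slit_map (\<alpha> * disc_moebius a z)"
proof -
  obtain g where g: "disc_uniformization slit_disc \<psi> g"
    using biholomorphism_from_disc_uniformizes[OF holo bij] .
  have "bij_betw slit_map (ball 0 1) slit_disc"
    using inj_on_slit_map slit_map_image by (simp add: bij_betw_def)
  then obtain h where h: "disc_uniformization slit_disc slit_map h"
    using biholomorphism_from_disc_uniformizes[OF slit_map_holomorphic] by blast
  interpret \<psi>: disc_uniformization slit_disc \<psi> g by (fact g)
  interpret slit: disc_uniformization slit_disc slit_map h by (fact h)
  have "(\<lambda>z. h (\<psi> z)) holomorphic_on ball 0 1"
    using holomorphic_on_compose_gen[OF holo slit.g_holomorphic] \<psi>.psi_image by (simp add: o_def)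
  moreover have "(\<lambda>z. g (slit_map z)) holomorphic_on ball 0 1"
    using holomorphic_on_compose_gen[OF slit_map_holomorphic \<psi>.g_holomorphic] slit.psi_image by (simp add: o_def)
  moreover have "h (\<psi> z) \<in> ball 0 1" "g (slit_map z) \<in> ball 0 1" if "z \<in> ball 0 1" for z
    using that \<psi>.psi_in slit.g_in \<psi>.g_in slit.psi_in by blast+
  moreover have "h (\<psi> (g (slit_map z))) = z" "g (slit_map (h (\<psi> z))) = z" if "z \<in> ball 0 1" for z
    using that by (simp_all add: \<psi>.psi_in slit.g_in \<psi>.g_in slit.psi_in \<psi>.psi_g slit.g_psi slit.psi_g \<psi>.g_psi)
  ultimately obtain \<alpha> a where \<alpha>: "cmod \<alpha> = 1" "cmod a < 1"
    and eq: "\<And>z. z \<in> ball 0 1 \<Longrightarrow> h (\<psi> z) = \<alpha> * disc_moebius a z"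
    by (rule disc_biholomorphism_eq_rotation_moebius) blast+
  have "\<psi> z = slit_map (\<alpha> * disc_moebius a z)" if "z \<in> ball 0 1" for z
    using slit.psi_g[OF \<psi>.psi_in[OF that]] eq[OF that] by simp
  with \<alpha> that show ?thesis
    by blast
qed

lemma slit_disc_riemann_map_boundary_extension:
  assumes holo: "\<psi> holomorphic_on ball 0 1" and bij: "bij_betw \<psi> (ball 0 1) slit_disc"
  obtains P where "continuous_on (cball 0 1) P" "\<And>z. z \<in> ball 0 1 \<Longrightarrow> P z = \<psi> z"
    "\<And>x. 0 < x \<Longrightarrow> x \<le> 1 \<Longrightarrow> \<exists>e1 e2. e1 \<in> cball 0 1 \<and> e2 \<in> cball 0 1 \<and> e1 \<noteq> e2 \<and>
        P e1 = complex_of_real x \<and> P e2 = complex_of_real x"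
proof -
  obtain \<alpha> a where \<alpha>: "cmod \<alpha> = 1" and a: "cmod a < 1"
    and \<psi>: "\<And>z. z \<in> ball 0 1 \<Longrightarrow> \<psi> z = slit_map (\<alpha> * disc_moebius a z)"
    by (rule slit_disc_riemann_map_eq[OF holo bij]) blast
  define m where "m = (\<lambda>z. \<alpha> * disc_moebius a z)"
  have "continuous_on (cball 0 1) m"
    unfolding m_def using continuous_on_disc_moebius[OF a] by (intro continuous_intros)
  moreover have "m ` cball 0 1 \<subseteq> cball 0 1"
    using disc_moebius_norm_le_1[OF a] \<alpha> by (auto simp: m_def norm_mult)
  ultimately have "continuous_on (cball 0 1) (slit_map \<circ> m)"
    using continuous_on_slit_map by (metis continuous_on_compose continuous_on_subset)
  moreover have "\<exists>e1 e2. e1 \<in> cball 0 1 \<and> e2 \<in> cball 0 1 \<and> e1 \<noteq> e2 \<and>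
      (slit_map \<circ> m) e1 = complex_of_real x \<and> (slit_map \<circ> m) e2 = complex_of_real x"
    if x: "0 < x" "x \<le> 1" for x
  proof -
    have preimage: "m (disc_moebius (-a) (cnj \<alpha> * \<zeta>)) = \<zeta>" "cmod (disc_moebius (-a) (cnj \<alpha> * \<zeta>)) \<le> 1"
      if "cmod \<zeta> = 1" for \<zeta>
    proof -
      have "cmod (cnj \<alpha> * \<zeta>) \<le> 1" "\<alpha> * cnj \<alpha> = 1"
        using that \<alpha> by (simp_all add: norm_mult complex_norm_square[symmetric])
      then show "m (disc_moebius (-a) (cnj \<alpha> * \<zeta>)) = \<zeta>" "cmod (disc_moebius (-a) (cnj \<alpha> * \<zeta>)) \<le> 1"
        using disc_moebius_inverse[of "-a" "cnj \<alpha> * \<zeta>"] disc_moebius_norm_le_1[of "-a"] a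
        by (simp_all add: m_def mult.assoc[symmetric])
    qed
    obtain \<zeta>1 \<zeta>2 where "cmod \<zeta>1 = 1" "cmod \<zeta>2 = 1" "\<zeta>1 \<noteq> \<zeta>2" "slit_map \<zeta>1 = x" "slit_map \<zeta>2 = x"
      using slit_map_two_circle_preimages[OF x] by blast
    then show ?thesis
      using preimage[of \<zeta>1] preimage[of \<zeta>2]
      by (intro exI[of _ "disc_moebius (-a) (cnj \<alpha> * \<zeta>1)"] exI[of _ "disc_moebius (-a) (cnj \<alpha> * \<zeta>2)"]) auto
  qed
  ultimately show ?thesis
    using that[of "slit_map \<circ> m"] \<psi> by (simp add: m_def)
qed

section \<open>Horoballs of a disc-like domain with a continuous boundary map\<close>

lemma frequently_of_filterlim:
  assumes "filterlim f F G" "G \<noteq> bot" "eventually (\<lambda>s. P (f s)) G"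
  shows "frequently P F"
  unfolding frequently_def
proof
  assume "eventually (\<lambda>y. \<not> P y) F"
  with assms(1) have "eventually (\<lambda>s. \<not> P (f s)) G"
    unfolding filterlim_iff by blast
  then have "eventually (\<lambda>s. False) G"
    using assms(3) by eventually_elim simp
  with assms(2) show False
    by simp
qed

lemma Liminf_le_of_frequently:
  fixes f :: "'a \<Rightarrow> 'b :: complete_linorder"
  assumes "frequently (\<lambda>y. f y \<le> C) F"
  shows "Liminf F f \<le> C"
proof (rule ccontr)
  assume "\<not> Liminf F f \<le> C"
  then have "eventually (\<lambda>y. C < f y) F"
    by (intro less_LiminfD) simp
  with assms obtain y where "f y \<le> C" "C < f y"
    using frequently_eventually_conj frequently_ex by blast
  then show False
    by simp
qed

lemma le_Limsup_of_frequently: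
  fixes f :: "'a \<Rightarrow> 'b :: complete_linorder"
  assumes "frequently (\<lambda>y. C \<le> f y) F"
  shows "C \<le> Limsup F f"
proof (rule ccontr)
  assume "\<not> C \<le> Limsup F f"
  then have "eventually (\<lambda>y. f y < C) F"
    by (intro Limsup_lessD) simp
  with assms obtain y where "C \<le> f y" "f y < C"
    using frequently_eventually_conj frequently_ex by blast
  then show False
    by simp
qed

lemma dist_of_real_mult_unit:
  assumes "cmod e = 1" "s \<le> 1"
  shows "dist (of_real s * e) e = 1 - s"
proof -
  have "of_real s * e - e = of_real (s - 1) * e"
    by (simp add: algebra_simps)
  then have "dist (of_real s * e) e = \<bar>s - 1\<bar> * cmod e"
    by (simp only: dist_norm norm_mult norm_of_real)
  then show ?thesis
    using assms by simp
qed

lemma one_minus_power2_bounds: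
  fixes c \<gamma> :: real
  assumes "1 - \<gamma> < c" "c < 1" "0 \<le> c"
  shows "0 < 1 - c\<^sup>2" "1 - c\<^sup>2 < 2 * \<gamma>"
proof -
  have "1 - c\<^sup>2 = (1 - c) * (1 + c)"
    by (simp add: power2_eq_square algebra_simps)
  also have "\<dots> \<le> (1 - c) * 2"
    using assms by (intro mult_left_mono) auto
  finally show "0 < 1 - c\<^sup>2" "1 - c\<^sup>2 < 2 * \<gamma>"
    using assms by (simp_all add: abs_square_less_1)
qed

locale disc_uniformization_boundary = disc_uniformization +
  fixes P :: "complex \<Rightarrow> complex"
  assumes P_continuous: "continuous_on (cball 0 1) P"
    and P_eq_psi: "\<And>z. z \<in> ball 0 1 \<Longrightarrow> P z = \<psi> z"
begin

definition boundary_fibre :: "complex \<Rightarrow> complex set" where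
  "boundary_fibre x = {e \<in> cball 0 1. P e = x}"

lemma kobayashi_diff_eq_poincare_dist_diff:
  assumes "z \<in> \<Omega>" "w \<in> \<Omega>"
  shows "kobayashi \<Omega> z w - kobayashi \<Omega> (\<psi> 0) w = poincare_dist (g z) (g w) - poincare_dist 0 (g w)"
  using assms psi_in[of 0] g_psi[of 0] by (simp add: kobayashi_eq_poincare_dist)

lemma norm_boundary_fibre:
  assumes "x \<notin> \<Omega>" "e \<in> boundary_fibre x"
  shows "cmod e = 1"
proof (rule ccontr)
  assume "cmod e \<noteq> 1"
  then have "e \<in> ball 0 1" "P e = x"
    using assms(2) by (auto simp: boundary_fibre_def)
  then show False
    using assms(1) P_eq_psi psi_in by auto
qed

lemma boundary_fibre_nonempty:
  assumes "x \<in> closure \<Omega>"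
  shows "boundary_fibre x \<noteq> {}"
proof -
  have "closed (P ` cball 0 1)"
    using P_continuous by (intro compact_imp_closed compact_continuous_image) auto
  moreover have "\<Omega> \<subseteq> P ` cball 0 1"
  proof
    fix w
    assume "w \<in> \<Omega>"
    then have "g w \<in> ball 0 1" "P (g w) = w"
      using g_in P_eq_psi psi_g by auto
    then show "w \<in> P ` cball 0 1"
      by (intro image_eqI[of _ _ "g w"]) auto
  qed
  ultimately have "closure \<Omega> \<subseteq> P ` cball 0 1"
    by (rule closure_minimal[rotated])
  then obtain e where "e \<in> cball 0 1" "P e = x"
    using assms by blast
  then show ?thesis
    by (auto simp: boundary_fibre_def)
qed

lemma compact_boundary_fibre: "compact (boundary_fibre x)"
proof -
  have "closed (boundary_fibre x)"
    unfolding boundary_fibre_def by (rule continuous_closed_preimage_constant[OF P_continuous closed_cball])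
  moreover have "bounded (boundary_fibre x)"
    by (rule bounded_subset[of "cball 0 1"]) (auto simp: boundary_fibre_def)
  ultimately show ?thesis
    by (simp add: compact_eq_bounded_closed)
qed

text \<open>By compactness of the closed disc, \<open>g w\<close> accumulates only at points of the fibre
  over \<open>x\<close> as \<open>w \<rightarrow> x\<close>.\<close>
lemma eventually_near_boundary_fibre:
  assumes "x \<notin> \<Omega>" "0 < \<epsilon>"
  shows "eventually (\<lambda>w. \<exists>e\<in>boundary_fibre x. dist (g w) e < \<epsilon>) (at x within \<Omega>)"
proof -
  define S where "S = cball 0 1 \<inter> (\<Inter>e\<in>boundary_fibre x. - ball e \<epsilon>)"
  have "compact S"
    unfolding S_def by (intro compact_Int_closed compact_cball closed_INT) auto
  then have "compact (P ` S)"
    using P_continuous by (intro compact_continuous_image) (auto simp: S_def intro: continuous_on_subset)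
  then have "closed (P ` S)"
    by (rule compact_imp_closed)
  moreover have "x \<notin> P ` S"
    using assms(2) by (force simp: S_def boundary_fibre_def)
  ultimately obtain r where r: "r > 0" "ball x r \<inter> P ` S = {}"
    by (metis open_Compl open_contains_ball_eq Compl_iff disjoint_eq_subset_Compl)
  show ?thesis
    unfolding eventually_at
  proof (intro exI conjI ballI impI)
    fix w
    assume "w \<in> \<Omega>" "w \<noteq> x \<and> dist w x < r"
    then have "g w \<in> ball 0 1" "P (g w) \<in> ball x r"
      using g_in P_eq_psi psi_g by (auto simp: dist_commute)
    then have "g w \<notin> S"
      using r by blast
    with \<open>g w \<in> ball 0 1\<close> show "\<exists>e\<in>boundary_fibre x. dist (g w) e < \<epsilon>"
      by (auto simp: S_def dist_commute)
  qed (fact r)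
qed

lemma radial_limit:
  assumes "x \<notin> \<Omega>" "e \<in> boundary_fibre x"
  shows "filterlim (\<lambda>s. \<psi> (of_real s * e)) (at x within \<Omega>) (at_left 1)"
proof -
  have e: "cmod e = 1" "P e = x" "e \<in> cball 0 1"
    using norm_boundary_fibre[OF assms] assms(2) by (simp_all add: boundary_fibre_def)
  have inside: "eventually (\<lambda>s. of_real s * e \<in> ball 0 1) (at_left (1::real))"
    using eventually_at_left_real[OF zero_less_one] by (rule eventually_mono) (simp add: norm_mult e(1))
  have "((\<lambda>s. of_real s * e) \<longlongrightarrow> of_real 1 * e) (at_left (1::real))"
    by (intro tendsto_mult tendsto_of_real tendsto_ident_at tendsto_const)
  moreover have "eventually (\<lambda>s. of_real s * e \<in> cball 0 1) (at_left (1::real))"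
    using inside by (rule eventually_mono) simp
  ultimately have "((P \<circ> (\<lambda>s. of_real s * e)) \<longlongrightarrow> x) (at_left 1)"
    using continuous_on_tendsto_compose[OF P_continuous _ e(3)] e(2) by (simp add: o_def)
  moreover have "eventually (\<lambda>s. (P \<circ> (\<lambda>s. of_real s * e)) s = \<psi> (of_real s * e)) (at_left 1)"
    using inside by (rule eventually_mono) (simp add: P_eq_psi)
  ultimately have "((\<lambda>s. \<psi> (of_real s * e)) \<longlongrightarrow> x) (at_left 1)"
    by (rule Lim_transform_eventually)
  moreover have "eventually (\<lambda>s. \<psi> (of_real s * e) \<in> \<Omega> \<and> \<psi> (of_real s * e) \<noteq> x) (at_left 1)"
    using inside by (rule eventually_mono) (use psi_in assms(1) in auto)
  ultimately show ?thesis
    by (simp add: filterlim_at)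
qed

lemma g_psi_radial:
  assumes "cmod e = 1" "0 \<le> s" "s < 1"
  shows "of_real s * e \<in> ball 0 1" "\<psi> (of_real s * e) \<in> \<Omega>" "g (\<psi> (of_real s * e)) = of_real s * e"
proof -
  show b: "of_real s * e \<in> ball 0 1"
    using assms by (simp add: norm_mult)
  show "\<psi> (of_real s * e) \<in> \<Omega>" "g (\<psi> (of_real s * e)) = of_real s * e"
    using psi_in[OF b] g_psi[OF b] by simp_all
qed

lemma frequently_kobayashi_diff_ge:
  assumes x: "x \<notin> \<Omega>" and e: "e \<in> boundary_fibre x" and z: "z \<in> \<Omega>"
    and \<delta>: "0 < \<delta>" "\<delta> \<le> dist (g z) e"
  shows "frequently (\<lambda>w. (1/2) * ln (\<delta>\<^sup>2 / 16) \<le> kobayashi \<Omega> z w - kobayashi \<Omega> (\<psi> 0) w) (at x within \<Omega>)"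
proof (rule frequently_of_filterlim[OF radial_limit[OF x e] trivial_limit_at_left_real])
  define a where "a = g z"
  have a: "cmod a < 1"
    using g_in[OF z] by (simp add: a_def)
  have e1: "cmod e = 1"
    using norm_boundary_fibre[OF x e] .
  have "eventually (\<lambda>s. s \<in> {max 0 (1 - \<delta>/2)<..<1}) (at_left (1::real))"
    using \<delta> by (intro eventually_at_left_real) simp
  then show "eventually (\<lambda>s. (1/2) * ln (\<delta>\<^sup>2 / 16)
      \<le> kobayashi \<Omega> z (\<psi> (of_real s * e)) - kobayashi \<Omega> (\<psi> 0) (\<psi> (of_real s * e))) (at_left 1)"
  proof (rule eventually_mono)
    fix s :: real
    assume s: "s \<in> {max 0 (1 - \<delta>/2)<..<1}"
    define b where "b = of_real s * e"
    have b: "cmod b < 1" and "\<psi> b \<in> \<Omega>" and gb: "g (\<psi> b) = b"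
      using g_psi_radial[OF e1, of s] s by (auto simp: b_def)
    have "dist a e \<le> dist a b + dist b e"
      by (rule dist_triangle)
    moreover have "dist b e < \<delta>/2"
      using s dist_of_real_mult_unit[OF e1, of s] by (simp add: b_def)
    ultimately have "\<delta>/2 \<le> cmod (b - a)"
      using \<delta> by (simp add: a_def dist_norm norm_minus_commute)
    then have "(1/2) * ln ((\<delta>/2)\<^sup>2 / (4 * (1 - (cmod a)\<^sup>2))) \<le> poincare_dist a b - poincare_dist 0 b"
      using poincare_dist_diff_lower_bound[OF a b] \<delta> by simp
    moreover have "ln (\<delta>\<^sup>2 / 16) \<le> ln ((\<delta>/2)\<^sup>2 / (4 * (1 - (cmod a)\<^sup>2)))"
    proof (rule ln_mono)
      show "\<delta>\<^sup>2 / 16 \<le> (\<delta>/2)\<^sup>2 / (4 * (1 - (cmod a)\<^sup>2))"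
        using a \<delta> by (simp add: power_divide field_simps abs_square_less_1 mult_le_cancel_left1)
    qed (use \<delta> in simp)
    ultimately show "(1/2) * ln (\<delta>\<^sup>2 / 16) \<le> kobayashi \<Omega> z (\<psi> b) - kobayashi \<Omega> (\<psi> 0) (\<psi> b)"
      using kobayashi_diff_eq_poincare_dist_diff[OF z \<open>\<psi> b \<in> \<Omega>\<close>] gb by (simp add: a_def)
  qed
qed

text \<open>Whatever \<open>z\<close> is, one of two distinct preimages of \<open>x\<close> lies at distance at least half
  their separation from \<open>g z\<close>; along its radius the lower bound above applies.\<close>
lemma horoball_s_empty_if_two_preimages:
  assumes x: "x \<notin> \<Omega>" and e1: "e1 \<in> boundary_fibre x" and e2: "e2 \<in> boundary_fibre x" and "e1 \<noteq> e2"
  shows "\<exists>R0>0. \<forall>R. 0 < R \<and> R < R0 \<longrightarrow> horoball_s \<Omega> (\<psi> 0) x R = {}"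
proof (intro exI conjI allI impI)
  define \<delta> where "\<delta> = dist e1 e2 / 2"
  have \<delta>: "0 < \<delta>"
    using \<open>e1 \<noteq> e2\<close> by (simp add: \<delta>_def)
  then show "0 < \<delta>\<^sup>2 / 16"
    by simp
  fix R
  assume R: "0 < R \<and> R < \<delta>\<^sup>2 / 16"
  have Limsup: "ereal ((1/2) * ln (\<delta>\<^sup>2 / 16))
      \<le> Limsup (at x within \<Omega>) (\<lambda>w. ereal (kobayashi \<Omega> z w - kobayashi \<Omega> (\<psi> 0) w))"
    if z: "z \<in> \<Omega>" for z
  proof -
    obtain e where "e \<in> boundary_fibre x" "\<delta> \<le> dist (g z) e"
    proof (cases "\<delta> \<le> dist (g z) e1")
      case False
      then have "\<delta> \<le> dist (g z) e2"
        using dist_triangle[of e1 e2 "g z"] by (simp add: \<delta>_def dist_commute)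
      with e2 that show ?thesis
        by blast
    qed (use e1 that in blast)
    from frequently_kobayashi_diff_ge[OF x this(1) z \<delta> this(2)] show ?thesis
      by (intro le_Limsup_of_frequently) simp
  qed
  have "ln R \<le> ln (\<delta>\<^sup>2 / 16)"
    using R by (intro ln_mono) auto
  then have "ereal (ln R / 2) \<le> ereal ((1/2) * ln (\<delta>\<^sup>2 / 16))"
    by simp
  with Limsup show "horoball_s \<Omega> (\<psi> 0) x R = {}"
    unfolding horoball_s_def using order.trans not_less by blast
qed

lemma frequently_kobayashi_diff_le:
  assumes x: "x \<notin> \<Omega>" and e: "e \<in> boundary_fibre x" and t: "0 \<le> t" "t < 1"
  shows "frequently (\<lambda>w. kobayashi \<Omega> (\<psi> (of_real t * e)) w - kobayashi \<Omega> (\<psi> 0) w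
    \<le> (1/2) * ln (4 * (1 - t\<^sup>2))) (at x within \<Omega>)"
proof (rule frequently_of_filterlim[OF radial_limit[OF x e] trivial_limit_at_left_real])
  have e1: "cmod e = 1"
    using norm_boundary_fibre[OF x e] .
  have "eventually (\<lambda>s. s \<in> {t<..<1}) (at_left (1::real))"
    using t by (intro eventually_at_left_real)
  then show "eventually (\<lambda>s. kobayashi \<Omega> (\<psi> (of_real t * e)) (\<psi> (of_real s * e))
      - kobayashi \<Omega> (\<psi> 0) (\<psi> (of_real s * e)) \<le> (1/2) * ln (4 * (1 - t\<^sup>2))) (at_left 1)"
  proof (rule eventually_mono)
    fix s :: real
    assume s: "s \<in> {t<..<1}"
    then show "kobayashi \<Omega> (\<psi> (of_real t * e)) (\<psi> (of_real s * e)) - kobayashi \<Omega> (\<psi> 0) (\<psi> (of_real s * e))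
        \<le> (1/2) * ln (4 * (1 - t\<^sup>2))"
      using kobayashi_diff_eq_poincare_dist_diff g_psi_radial[OF e1 t] g_psi_radial[OF e1, of s] t
        poincare_dist_diff_radial_upper_bound[OF e1 t(1), of s]
      by simp
  qed
qed

lemma boundary_point_in_closure_horoball_b:
  assumes x: "x \<notin> \<Omega>" "x \<in> closure \<Omega>" and R: "0 < R"
  shows "x \<in> closure (horoball_b \<Omega> (\<psi> 0) x R)"
proof -
  obtain e where e: "e \<in> boundary_fibre x"
    using boundary_fibre_nonempty[OF x(2)] by blast
  have e1: "cmod e = 1"
    using norm_boundary_fibre[OF x(1) e] .
  have "eventually (\<lambda>t. t \<in> {max 0 (1 - R/8)<..<1}) (at_left (1::real))"
    using R by (intro eventually_at_left_real) simp
  then have "eventually (\<lambda>t. \<psi> (of_real t * e) \<in> horoball_b \<Omega> (\<psi> 0) x R) (at_left 1)"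
  proof (rule eventually_mono)
    fix t :: real
    assume t: "t \<in> {max 0 (1 - R/8)<..<1}"
    have "1 - t\<^sup>2 = (1 - t) * (1 + t)"
      by (simp add: power2_eq_square algebra_simps)
    also have "\<dots> \<le> (1 - t) * 2"
      using t by (intro mult_left_mono) auto
    finally have "ln (4 * (1 - t\<^sup>2)) < ln R"
      using t R by (intro ln_less_cancel_iff[THEN iffD2]) (auto simp: abs_square_less_1)
    moreover have "Liminf (at x within \<Omega>) (\<lambda>w. ereal (kobayashi \<Omega> (\<psi> (of_real t * e)) w - kobayashi \<Omega> (\<psi> 0) w))
        \<le> ereal ((1/2) * ln (4 * (1 - t\<^sup>2)))"
      using frequently_kobayashi_diff_le[OF x(1) e, of t] t
      by (intro Liminf_le_of_frequently) (auto elim: frequently_elim1)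
    ultimately have "Liminf (at x within \<Omega>) (\<lambda>w. ereal (kobayashi \<Omega> (\<psi> (of_real t * e)) w - kobayashi \<Omega> (\<psi> 0) w))
        < ereal (ln R / 2)"
      by (simp add: le_less_trans)
    then show "\<psi> (of_real t * e) \<in> horoball_b \<Omega> (\<psi> 0) x R"
      using g_psi_radial[OF e1, of t] t by (auto simp: horoball_b_def)
  qed
  moreover have "((\<lambda>t. \<psi> (of_real t * e)) \<longlongrightarrow> x) (at_left 1)"
    using radial_limit[OF x(1) e] by (simp add: filterlim_at)
  ultimately show ?thesis
    by (intro Lim_in_closed_set[OF closed_closure _ trivial_limit_at_left_real])
       (auto elim: eventually_mono intro: closure_subset[THEN subsetD])
qed

lemma eventually_kobayashi_diff_ge:
  assumes x: "x \<notin> \<Omega>" and z: "z \<in> \<Omega>" and d: "0 < d" "\<And>e. e \<in> boundary_fibre x \<Longrightarrow> d \<le> dist (g z) e"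
  shows "eventually (\<lambda>w. (1/2) * ln ((d/2)\<^sup>2 / (4 * (1 - (cmod (g z))\<^sup>2)))
      \<le> kobayashi \<Omega> z w - kobayashi \<Omega> (\<psi> 0) w) (at x within \<Omega>)"
proof -
  have "eventually (\<lambda>w. w \<in> \<Omega>) (at x within \<Omega>)"
    by (simp add: eventually_at_filter)
  moreover have "eventually (\<lambda>w. \<exists>e\<in>boundary_fibre x. dist (g w) e < d/2) (at x within \<Omega>)"
    using d(1) by (intro eventually_near_boundary_fibre[OF x]) simp
  ultimately show ?thesis
  proof eventually_elim
    case (elim w)
    then obtain e where e: "e \<in> boundary_fibre x" "dist (g w) e < d/2"
      by auto
    have "dist (g z) e \<le> dist (g z) (g w) + dist (g w) e"
      by (rule dist_triangle)
    with d(2)[OF e(1)] e(2) have "d/2 \<le> cmod (g w - g z)"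
      by (simp add: dist_norm norm_minus_commute)
    with poincare_dist_diff_lower_bound[of "g z" "g w" "d/2"] g_in z elim(1) d(1)
    show ?case
      by (simp add: kobayashi_diff_eq_poincare_dist_diff[OF z elim(1)])
  qed
qed

lemma exists_near_boundary_fibre_if_in_closure:
  assumes "y \<notin> \<Omega>" "H \<subseteq> \<Omega>" "y \<in> closure H" "0 < \<gamma>"
  obtains z e where "z \<in> H" "e \<in> boundary_fibre y" "dist (g z) e < \<gamma>"
proof -
  obtain r where r: "0 < r" "\<And>w. w \<in> \<Omega> \<Longrightarrow> dist w y < r \<Longrightarrow> \<exists>e\<in>boundary_fibre y. dist (g w) e < \<gamma>"
    using eventually_near_boundary_fibre[OF assms(1,4)] assms(1) unfolding eventually_at by metis
  obtain z where "z \<in> H" "dist z y < r"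
    using assms(3) r(1) unfolding closure_approachable by blast
  with r(2) assms(2) that show ?thesis
    by blast
qed

text \<open>Points of the big horoball near another boundary point \<open>y\<close> have \<open>g z\<close> close to the
  circle but far from the fibre over \<open>x\<close>, which makes their Busemann-type function large.\<close>
lemma not_in_closure_horoball_b:
  assumes x: "x \<notin> \<Omega>" and y: "y \<notin> \<Omega>" "y \<noteq> x" and R: "0 < R"
  shows "y \<notin> closure (horoball_b \<Omega> (\<psi> 0) x R)"
proof
  assume "y \<in> closure (horoball_b \<Omega> (\<psi> 0) x R)"
  have "boundary_fibre x \<inter> boundary_fibre y = {}"
    using y(2) by (auto simp: boundary_fibre_def)
  then obtain d where d: "0 < d" "\<And>e e'. e \<in> boundary_fibre x \<Longrightarrow> e' \<in> boundary_fibre y \<Longrightarrow> d \<le> dist e e'"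
    using separate_compact_closed[OF compact_boundary_fibre compact_imp_closed[OF compact_boundary_fibre]]
    by metis
  define \<gamma> where "\<gamma> = min (d/2) (d\<^sup>2 / (128 * R))"
  have \<gamma>: "0 < \<gamma>" "\<gamma> \<le> d/2" "\<gamma> \<le> d\<^sup>2 / (128 * R)"
    using d R by (auto simp: \<gamma>_def)
  obtain z e' where zH: "z \<in> horoball_b \<Omega> (\<psi> 0) x R" and e': "e' \<in> boundary_fibre y" "dist (g z) e' < \<gamma>"
    using exists_near_boundary_fibre_if_in_closure[OF y(1) _ \<open>y \<in> closure _\<close> \<gamma>(1)]
    by (auto simp: horoball_b_def)
  then have z: "z \<in> \<Omega>"
    and Liminf: "Liminf (at x within \<Omega>) (\<lambda>w. ereal (kobayashi \<Omega> z w - kobayashi \<Omega> (\<psi> 0) w)) < ereal (ln R / 2)"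
    by (auto simp: horoball_b_def)
  define A where "A = 1 - (cmod (g z))\<^sup>2"
  have "1 - \<gamma> < cmod (g z)" "cmod (g z) < 1"
    using norm_boundary_fibre[OF y(1) e'(1)] e'(2) norm_triangle_ineq2[of e' "g z"] g_in[OF z]
    by (simp_all add: dist_norm norm_minus_commute)
  then have A: "0 < A" "A < 2 * \<gamma>"
    unfolding A_def using one_minus_power2_bounds norm_ge_zero by blast+
  have "64 * R * A < 64 * R * (2 * \<gamma>)"
    using R A(2) by simp
  also have "\<dots> \<le> d\<^sup>2"
    using R \<gamma>(3) by (simp add: field_simps)
  finally have A_small: "64 * R * A < d\<^sup>2" .
  have "d/2 \<le> dist (g z) e" if "e \<in> boundary_fibre x" for e
    using d(2)[OF that e'(1)] dist_triangle[of e e' "g z"] e'(2) \<gamma>(2) by (simp add: dist_commute)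
  from eventually_kobayashi_diff_ge[OF x z _ this] d(1)
  have "ereal ((1/2) * ln ((d/4)\<^sup>2 / (4 * A)))
      \<le> Liminf (at x within \<Omega>) (\<lambda>w. ereal (kobayashi \<Omega> z w - kobayashi \<Omega> (\<psi> 0) w))"
    by (intro Liminf_bounded) (simp_all add: A_def)
  then have "ereal ((1/2) * ln ((d/4)\<^sup>2 / (4 * A))) < ereal (ln R / 2)"
    using Liminf by (rule le_less_trans)
  then have "(d/4)\<^sup>2 / (4 * A) < R"
    using A d R by simp
  with A(1) A_small show False
    by (simp add: power_divide field_simps)
qed

lemma closure_horoball_b_Int_frontier:
  assumes "x \<in> frontier \<Omega>" "0 < R"
  shows "closure (horoball_b \<Omega> (\<psi> 0) x R) \<inter> frontier \<Omega> = {x}"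
proof -
  have frontier: "frontier \<Omega> = closure \<Omega> - \<Omega>"
    using open_domain by (simp add: frontier_def interior_open)
  then show ?thesis
    using assms boundary_point_in_closure_horoball_b not_in_closure_horoball_b by blast
qed

end

theorem mainTheorem13:
  fixes \<psi> :: "complex \<Rightarrow> complex" and \<Omega> :: "complex set"
  assumes \<Omega>_def: "\<Omega> = ball 0 1 - {complex_of_real t | t. 0 \<le> t \<and> t < 1}"
    and holo: "\<psi> holomorphic_on ball 0 1"
    and bij: "bij_betw \<psi> (ball 0 1) \<Omega>"
  shows "(\<forall>x::real. 0 < x \<and> x \<le> 1 \<longrightarrow>
           (\<exists>R0>0. \<forall>R. 0 < R \<and> R < R0 \<longrightarrow> horoball_s \<Omega> (\<psi> 0) (complex_of_real x) R = {}))
       \<and> (\<forall>x \<in> frontier \<Omega>. \<forall>R>0. closure (horoball_b \<Omega> (\<psi> 0) x R) \<inter> frontier \<Omega> = {x})"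
proof -
  obtain g where g: "disc_uniformization \<Omega> \<psi> g"
    using biholomorphism_from_disc_uniformizes[OF holo bij] .
  have "\<Omega> = slit_disc"
    by (simp add: \<Omega>_def slit_disc_def)
  then obtain P where P: "continuous_on (cball 0 1) P" "\<And>z. z \<in> ball 0 1 \<Longrightarrow> P z = \<psi> z"
    and two: "\<And>x. 0 < x \<Longrightarrow> x \<le> 1 \<Longrightarrow> \<exists>e1 e2. e1 \<in> cball 0 1 \<and> e2 \<in> cball 0 1 \<and> e1 \<noteq> e2 \<and>
        P e1 = complex_of_real x \<and> P e2 = complex_of_real x"
    using slit_disc_riemann_map_boundary_extension[OF holo] bij by blast
  interpret disc_uniformization_boundary \<Omega> \<psi> g P
    using g P by (simp add: disc_uniformization_boundary_def disc_uniformization_boundary_axioms_def)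
  have "\<exists>R0>0. \<forall>R. 0 < R \<and> R < R0 \<longrightarrow> horoball_s \<Omega> (\<psi> 0) (complex_of_real x) R = {}"
    if x: "0 < x" "x \<le> 1" for x :: real
  proof -
    obtain e1 e2 where "e1 \<in> boundary_fibre x" "e2 \<in> boundary_fibre x" "e1 \<noteq> e2"
      using two[OF x] by (auto simp: boundary_fibre_def)
    moreover have "complex_of_real x \<notin> \<Omega>"
      using x by (cases "x = 1") (auto simp: \<Omega>_def)
    ultimately show ?thesis
      using horoball_s_empty_if_two_preimages by blast
  qed
  then show ?thesis
    using closure_horoball_b_Int_frontier by blast
qed

end
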